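(* Let $\mathcal{T}^{pl}$ be the vector space spanned by the set $T^{pl}$ of planar rooted trees, $\mathcal{T}$ the vector space spanned by the set $T$ of (non-planar) rooted trees, $\pi:\mathcal{T}^{pl}\to\mathcal{T}$ the linear "forget planarity" projection, and $\Psi:\mathcal{T}^{pl}\to\mathcal{T}^{pl}$ the linear map with $\Psi(\bullet)=\bullet$ and $\Psi(\sigma_1\circ\!\!\searrow\sigma_2)=\Psi(\sigma_1)\searrow\Psi(\sigma_2)$ for all planar rooted trees $\sigma_1,\sigma_2$. Put $\overline{\Psi}=\pi\circ\Psi$. Then for every planar rooted tree $\tau$, $$\overline{\Psi}(\tau)=\sum_{s\in T}\alpha(s,\tau)\,s,$$ where the coefficients $\alpha(s,\tau)$ are nonnegative integers, and $$\alpha(s,\tau)=\overline{b}(s,\tau):=\frac{\tilde b(s,\tau)}{sym(s)},$$ where $sym(s)$ is the symmetry factor of $s$ and $\tilde b(s,\tau)$ is the number of bijections $\varphi:V(s)\to V(\tau)$ which are increasing from $(V(s),<)$ into $(V(\tau),\lll)$ and such that $\varphi^{-1}$ is increasing from $(V(\tau),<)$ into $(V(s),<)$.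
   Context: A rooted tree is a finite oriented tree with a distinguished vertex (the root) having no outgoing edge, every other vertex having exactly one outgoing edge; it is planar if endowed with an embedding in the plane (so the branches at each vertex are ordered left to right). $\bullet$ denotes the one-vertex tree. $V(\sigma)$ is the vertex set of a tree $\sigma$. Every planar rooted tree is $B_+(\tau_1\cdots\tau_k)$, obtained by connecting the roots of the ordered list of planar trees $\tau_1,\dots,\tau_k$ to a new root. The left Butcher product is $\sigma\circ\!\!\searrow\tau:=B_+(\sigma\tau_1\cdots\tau_k)$ when $\tau=B_+(\tau_1\cdots\tau_k)$ (graft the root of $\sigma$ as the new leftmost branch at the root of $\tau$); every planar rooted tree with at least two vertices is uniquely of the form $\sigma_1\circ\!\!\searrow\sigma_2$, so $\Psi$ is well defined recursively. The left grafting is the bilinear product $\sigma\searrow\tau=\sum_{v\in V(\tau)}\sigma\searrow_v\tau$, where $\sigma\searrow_v\tau$ is obtained by grafting the root of $\sigma$ onto the vertex $v$ of $\tau$ so that $\sigma$ becomes the leftmost branch at $v$. Partial order $<$ on the vertices of a tree: $v<w$ if $v\neq w$ and the path from the root to $w$ passes through $v$. Total order $\lll$ on $V(\tau)$ for a planar tree $\tau$, defined recursively: for $\tau=\tau_1\circ\!\!\searrow\tau_2$, $v\lll w$ iff ($v\lll w$ inside $V(\tau_1)$ or inside $V(\tau_2)$) or ($v\in V(\tau_2)$ and $w\in V(\tau_1)$). A map $f$ is increasing from $(A,\prec_A)$ into $(B,\prec_B)$ if $a\prec_A a'$ implies $f(a)\prec_B f(a')$. The symmetry factor $sym(s)$ of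 a non-planar rooted tree $s$ is the number of bijections $V(s)\to V(s)$ which are increasing from $(V(s),<)$ onto $(V(s),<)$ (i.e. tree automorphisms). *)

theory Defs
  imports Complex_Main "HOL-Library.Multiset" "HOL-Library.Poly_Mapping" "HOL-Library.FuncSet"
    "HOL-Library.Sublist"
begin

datatype ptree = Node "ptree list"

datatype rtree = RNode "rtree multiset"

definition bullet :: ptree where "bullet = Node []"

fun lbutcher :: "ptree \<Rightarrow> ptree \<Rightarrow> ptree" where
  "lbutcher s (Node ts) = Node (s # ts)"

fun pi_tree :: "ptree \<Rightarrow> rtree" where
  "pi_tree (Node ts) = RNode (mset (map pi_tree ts))"

text \<open>A vertex of a planar tree is encoded by the path of child indices (0 = leftmost)
  leading from the root to it.\<close>
type_synonym vertex = "nat list"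

fun is_vert :: "ptree \<Rightarrow> vertex \<Rightarrow> bool" where
  "is_vert t [] = True"
| "is_vert (Node ts) (i # p) = (i < length ts \<and> is_vert (ts ! i) p)"

definition verts :: "ptree \<Rightarrow> vertex set" where
  "verts t = {p. is_vert t p}"

definition vless :: "vertex \<Rightarrow> vertex \<Rightarrow> bool" where
  "vless v w \<longleftrightarrow> v \<noteq> w \<and> prefix v w"

text \<open>Total order \<lll> on the vertices of a planar tree, defined recursively along
  tau = tau1 \<circ>\<searrow> tau2 where tau = Node (tau1 # ts), tau2 = Node ts.
  Inside tau, a vertex 0 # p belongs to the copy of tau1 (as vertex p of tau1);
  the root [] and the vertices (Suc i) # p belong to the copy of tau2
  (as vertices [] resp. i # p of tau2).\<close>
fun in_left :: "vertex \<Rightarrow> bool" where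
  "in_left [] = False"
| "in_left (i # p) = (i = 0)"

fun shift_down :: "vertex \<Rightarrow> vertex" where
  "shift_down [] = []"
| "shift_down (i # p) = (i - 1) # p"

function llless :: "ptree \<Rightarrow> vertex \<Rightarrow> vertex \<Rightarrow> bool" where
  "llless (Node []) v w = False"
| "llless (Node (t1 # ts)) v w =
     (if in_left v \<and> in_left w then llless t1 (tl v) (tl w)
      else if \<not> in_left v \<and> \<not> in_left w then llless (Node ts) (shift_down v) (shift_down w)
      else \<not> in_left v \<and> in_left w)"
  by pat_completeness auto
termination
  by (relation "measure (\<lambda>(t, v, w). size t)") auto

fun graft_at :: "ptree \<Rightarrow> vertex \<Rightarrow> ptree \<Rightarrow> ptree" where
  "graft_at s [] (Node ts) = Node (s # ts)"
| "graft_at s (i # p) (Node ts) = Node (ts[i := graft_at s p (ts ! i)])"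

type_synonym ptree_lin = "ptree \<Rightarrow>\<^sub>0 int"
type_synonym rtree_lin = "rtree \<Rightarrow>\<^sub>0 int"

definition lgraft_basis :: "ptree \<Rightarrow> ptree \<Rightarrow> ptree_lin" where
  "lgraft_basis s t = (\<Sum>v\<in>verts t. frag_of (graft_at s v t))"

definition lgraft :: "ptree_lin \<Rightarrow> ptree_lin \<Rightarrow> ptree_lin" where
  "lgraft f g = frag_extend (\<lambda>a. frag_extend (\<lambda>b. lgraft_basis a b) g) f"

function Psi_basis :: "ptree \<Rightarrow> ptree_lin" where
  "Psi_basis (Node []) = frag_of (Node [])"
| "Psi_basis (Node (t1 # ts)) = lgraft (Psi_basis t1) (Psi_basis (Node ts))"
  by pat_completeness auto
termination
  by (relation "measure size") auto

definition Psi :: "ptree_lin \<Rightarrow> ptree_lin" where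
  "Psi = frag_extend Psi_basis"

definition pi_lin :: "ptree_lin \<Rightarrow> rtree_lin" where
  "pi_lin = frag_extend (\<lambda>t. frag_of (pi_tree t))"

definition Psibar :: "ptree_lin \<Rightarrow> rtree_lin" where
  "Psibar f = pi_lin (Psi f)"

text \<open>Symmetry factor of the non-planar tree pi_tree sigma, computed on the planar
  representative sigma: number of bijections V \<rightarrow> V increasing for <.\<close>
definition sym_factor :: "ptree \<Rightarrow> nat" where
  "sym_factor \<sigma> = card {f \<in> verts \<sigma> \<rightarrow>\<^sub>E verts \<sigma>. bij_betw f (verts \<sigma>) (verts \<sigma>) \<and>
       (\<forall>v\<in>verts \<sigma>. \<forall>w\<in>verts \<sigma>. vless v w \<longrightarrow> vless (f v) (f w))}"

text \<open>b-tilde(s, tau) computed on a planar representative sigma of s.\<close>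
definition b_tilde :: "ptree \<Rightarrow> ptree \<Rightarrow> nat" where
  "b_tilde \<sigma> \<tau> = card {\<phi> \<in> verts \<sigma> \<rightarrow>\<^sub>E verts \<tau>. bij_betw \<phi> (verts \<sigma>) (verts \<tau>) \<and>
       (\<forall>v\<in>verts \<sigma>. \<forall>w\<in>verts \<sigma>. vless v w \<longrightarrow> llless \<tau> (\<phi> v) (\<phi> w)) \<and>
       (\<forall>x\<in>verts \<tau>. \<forall>y\<in>verts \<tau>. vless x y \<longrightarrow>
           vless (inv_into (verts \<sigma>) \<phi> x) (inv_into (verts \<sigma>) \<phi> y))}"

end

theory Submission
  imports Defs "HOL-Combinatorics.List_Permutation"
begin

text \<open>
  Unfolding its recursion, \<open>\<Psi>(\<tau>)\<close> is a sum over \<^emph>\<open>entries\<close>: planar trees \<open>\<rho>\<close> together with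
  a bijection \<open>V(\<rho>) \<rightarrow> V(\<tau>)\<close> that carries the tree order of \<open>\<rho>\<close> to a relation \<open>R\<close> lying
  between the tree order \<open><\<close> of \<open>\<tau>\<close> and \<open>\<lll>\<close>. The relation \<open>R\<close> determines the entry, and
  conversely every transitive \<open>R\<close> between \<open><\<close> and \<open>\<lll>\<close> whose sets of predecessors are chains
  comes from an entry (the new branch of \<open>\<tau>\<^sub>1 \<circ>\<searrow> \<tau>\<^sub>2\<close> is grafted on the greatest predecessor
  of its root). So the coefficient of \<open>s\<close> in \<open>\<Psi>(\<tau>)\<close> counts the entries of shape \<open>s\<close>. On the
  other hand the maps counted by \<open>b\<^sup>~(s, \<tau>)\<close> are exactly the order isomorphisms from \<open>s\<close> onto
  such a relation, and every entry of shape \<open>s\<close> is reached by exactly \<open>sym(s)\<close> of them.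
\<close>

section \<open>Vertices and the two orders\<close>

lemma Nil_in_verts [simp]: "[] \<in> verts t"
  by (simp add: verts_def)

lemma Cons_in_verts [simp]: "j # q \<in> verts (Node ts) \<longleftrightarrow> j < length ts \<and> q \<in> verts (ts ! j)"
  by (simp add: verts_def)

lemma verts_Node: "verts (Node ts) = insert [] (\<Union>i<length ts. (#) i ` verts (ts ! i))"
proof -
  have "x \<in> verts (Node ts) \<longleftrightarrow> x = [] \<or> (\<exists>i<length ts. \<exists>q. x = i # q \<and> q \<in> verts (ts ! i))" for x
    by (cases x) auto
  then show ?thesis by auto
qed

lemma finite_verts: "finite (verts t)"
  by (induction t) (simp add: verts_Node)

lemma verts_prefix_closed: "y \<in> verts t \<Longrightarrow> prefix x y \<Longrightarrow> x \<in> verts t"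
proof (induction t y arbitrary: x rule: is_vert.induct)
  case (2 ts i p)
  then show ?case by (cases x) (auto simp: verts_def)
qed (simp add: verts_def)

fun shift_up :: "vertex \<Rightarrow> vertex" where
  "shift_up [] = []"
| "shift_up (i # p) = Suc i # p"

lemma shift_up_eq_iff [simp]: "shift_up a = shift_up b \<longleftrightarrow> a = b"
  by (cases a; cases b) auto

lemma shift_up_neq_Cons_0 [simp]: "shift_up a \<noteq> 0 # b" "0 # b \<noteq> shift_up a"
  by (cases a; simp)+

lemma shift_up_in_verts_Cons [simp]: "shift_up a \<in> verts (Node (t1 # ts)) \<longleftrightarrow> a \<in> verts (Node ts)"
  by (cases a) simp_all

lemma verts_Node_Cons: "verts (Node (t1 # ts)) = (#) 0 ` verts t1 \<union> shift_up ` verts (Node ts)"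
proof -
  have "x \<in> verts (Node (t1 # ts)) \<longleftrightarrow>
      (\<exists>q. x = 0 # q \<and> q \<in> verts t1) \<or> (\<exists>q. x = shift_up q \<and> q \<in> verts (Node ts))" for x
  proof (cases x)
    case Nil
    then show ?thesis by (auto intro: exI[of _ "[]"])
  next
    case (Cons j r)
    have "(\<exists>q. Suc k # r = shift_up q \<and> q \<in> verts (Node ts)) \<longleftrightarrow> k # r \<in> verts (Node ts)" for k
      by (metis shift_up.simps(2) shift_up_eq_iff)
    then show ?thesis using Cons by (cases j) auto
  qed
  then show ?thesis by blast
qed

lemma vless_Nil_right [simp]: "\<not> vless x []"
  by (simp add: vless_def)

lemma vless_Nil_left [simp]: "vless [] x \<longleftrightarrow> x \<noteq> []"
  by (auto simp: vless_def)

lemma vless_Cons_Cons [simp]: "vless (i # a) (j # b) \<longleftrightarrow> i = j \<and> vless a b"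
  by (auto simp: vless_def)

lemma vless_shift_up [simp]:
  "vless (shift_up a) (shift_up b) \<longleftrightarrow> vless a b"
  "vless (shift_up a) (0 # b) \<longleftrightarrow> a = []"
  "\<not> vless (0 # a) (shift_up b)"
  by (cases a; cases b; simp)+

lemma vless_trans: "vless a b \<Longrightarrow> vless b c \<Longrightarrow> vless a c"
  unfolding vless_def by (metis prefix_order.antisym prefix_order.trans)

lemma llless_irrefl: "\<not> llless t v v"
proof -
  have "v = w \<Longrightarrow> \<not> llless t v w" for w
    by (induction t v w rule: llless.induct) auto
  then show ?thesis by blast
qed

lemma llless_Nil_right: "\<not> llless t v []"
  by (induction t v "[] :: vertex" rule: llless.induct) auto

lemma llless_Node_Cons [simp]:
  "llless (Node (t1 # ts)) (0 # a) (0 # b) \<longleftrightarrow> llless t1 a b"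
  "llless (Node (t1 # ts)) (shift_up a) (shift_up b) \<longleftrightarrow> llless (Node ts) a b"
  "llless (Node (t1 # ts)) (shift_up a) (0 # b)"
  "\<not> llless (Node (t1 # ts)) (0 # a) (shift_up b)"
  by (cases a; cases b; simp)+

definition tree_rel :: "ptree \<Rightarrow> vertex rel" where
  "tree_rel t = {(a, b). a \<in> verts t \<and> b \<in> verts t \<and> vless a b}"

definition lll_rel :: "ptree \<Rightarrow> vertex rel" where
  "lll_rel t = {(a, b). a \<in> verts t \<and> b \<in> verts t \<and> llless t a b}"

definition rel_image :: "(vertex \<Rightarrow> vertex) \<Rightarrow> vertex rel \<Rightarrow> vertex rel" where
  "rel_image f R = map_prod f f ` R"

lemma rel_image_tree_rel:
  "rel_image f (tree_rel t) = {(f a, f b) | a b. a \<in> verts t \<and> b \<in> verts t \<and> vless a b}"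
  by (auto simp: rel_image_def tree_rel_def)

lemma finite_tree_rel: "finite (tree_rel t)"
proof -
  have "tree_rel t \<subseteq> verts t \<times> verts t" by (auto simp: tree_rel_def)
  then show ?thesis using finite_verts finite_subset by blast
qed

lemma mem_rel_image_tree_rel:
  "inj_on f (verts t) \<Longrightarrow> a \<in> verts t \<Longrightarrow> b \<in> verts t \<Longrightarrow>
     (f a, f b) \<in> rel_image f (tree_rel t) \<longleftrightarrow> vless a b"
  by (auto simp: rel_image_def tree_rel_def inj_on_def)

lemma trans_rel_image_tree_rel: "inj_on f (verts t) \<Longrightarrow> trans (rel_image f (tree_rel t))"
  by (rule transI) (auto simp: rel_image_def tree_rel_def inj_on_def intro: vless_trans)

section \<open>Addresses of vertices after grafting\<close>

text \<open>
  In \<open>graft_at s v t\<close> the copy of \<open>s\<close> occupies the vertices below \<open>v @ [0]\<close>; every other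
  vertex comes from \<open>t\<close>, the children of \<open>v\<close> having moved one place to the right.
  \<open>graft_shift v\<close> and \<open>graft_unshift v\<close> translate between the two addresses.
\<close>

abbreviation in_graft :: "vertex \<Rightarrow> vertex \<Rightarrow> bool" where
  "in_graft v x \<equiv> prefix (v @ [0]) x"

abbreviation graft_part :: "vertex \<Rightarrow> vertex \<Rightarrow> vertex" where
  "graft_part v x \<equiv> drop (Suc (length v)) x"

definition graft_unshift :: "vertex \<Rightarrow> vertex \<Rightarrow> vertex" where
  "graft_unshift v x = (if strict_prefix v x then x[length v := x ! length v - 1] else x)"

definition graft_shift :: "vertex \<Rightarrow> vertex \<Rightarrow> vertex" where
  "graft_shift v x = (if strict_prefix v x then x[length v := Suc (x ! length v)] else x)"

lemma graft_shift_unshift_simps [simp]: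
  "graft_unshift [] (j # r) = (j - 1) # r"
  "graft_unshift v [] = []"
  "graft_unshift (i # v) (j # r) = (if i = j then i # graft_unshift v r else j # r)"
  "graft_shift [] (j # r) = Suc j # r"
  "graft_shift v [] = []"
  "graft_shift (i # v) (j # r) = (if i = j then i # graft_shift v r else j # r)"
  by (auto simp: graft_unshift_def graft_shift_def)

lemma graft_shift_unshift: "\<not> in_graft v x \<Longrightarrow> graft_shift v (graft_unshift v x) = x"
proof (induction v arbitrary: x)
  case Nil
  then show ?case by (cases x) auto
next
  case (Cons i v)
  then show ?case by (cases x) auto
qed

lemma graft_unshift_shift [simp]: "graft_unshift v (graft_shift v x) = x"
proof (induction v arbitrary: x)
  case Nil
  then show ?case by (cases x) auto
next
  case (Cons i v)
  then show ?case by (cases x) auto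
qed

lemma not_in_graft_shift [simp]: "\<not> in_graft v (graft_shift v x)"
proof (induction v arbitrary: x)
  case Nil
  then show ?case by (cases x) auto
next
  case (Cons i v)
  then show ?case by (cases x) auto
qed

lemma graft_unshift_eq_iff:
  "\<not> in_graft v x \<Longrightarrow> \<not> in_graft v y \<Longrightarrow> graft_unshift v x = graft_unshift v y \<longleftrightarrow> x = y"
  by (metis graft_shift_unshift)

lemma prefix_graft_unshift_iff:
  "\<not> in_graft v x \<Longrightarrow> \<not> in_graft v y \<Longrightarrow>
     prefix (graft_unshift v x) (graft_unshift v y) \<longleftrightarrow> prefix x y"
proof (induction v arbitrary: x y)
  case Nil
  then show ?case
    by (cases x; cases y) (simp_all, metis Suc_pred)
next
  case (Cons i v)
  then show ?case by (cases x; cases y) simp_all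
qed

lemma prefix_into_graft_iff:
  "\<not> in_graft v x \<Longrightarrow> in_graft v y \<Longrightarrow> prefix x y \<longleftrightarrow> prefix (graft_unshift v x) v"
proof (induction v arbitrary: x y)
  case Nil
  then show ?case by (cases x; cases y) simp_all
next
  case (Cons i v)
  obtain r' where y: "y = i # r'" "in_graft v r'" using Cons.prems(2) by (cases y) auto
  show ?case
  proof (cases x)
    case (Cons j r)
    then show ?thesis using Cons.IH[of r r'] Cons.prems(1) y by (cases "j = i") simp_all
  qed simp
qed

lemma in_graft_decomp: "in_graft v x \<Longrightarrow> x = v @ 0 # graft_part v x"
  by (auto simp: prefix_def)

lemma verts_graft_at:
  "v \<in> verts t \<Longrightarrow> x \<in> verts (graft_at s v t) \<longleftrightarrow>
     (if in_graft v x then graft_part v x \<in> verts s else graft_unshift v x \<in> verts t)"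
proof (induction v arbitrary: t x)
  case Nil
  obtain ts where t: "t = Node ts" by (cases t)
  show ?case
  proof (cases x)
    case (Cons j r)
    then show ?thesis by (cases j) (simp_all add: t)
  qed (simp add: t)
next
  case (Cons i v)
  obtain ts where t: "t = Node ts" by (cases t)
  then have i: "i < length ts" "v \<in> verts (ts ! i)" using Cons.prems by auto
  show ?case
  proof (cases x)
    case (Cons j r)
    then show ?thesis using Cons.IH[OF i(2), of r] i by (cases "j = i") (auto simp: t)
  qed (simp add: t)
qed

lemma vless_in_graft:
  "in_graft v x \<Longrightarrow> in_graft v y \<Longrightarrow> vless x y \<longleftrightarrow> vless (graft_part v x) (graft_part v y)"
proof -
  assume "in_graft v x" "in_graft v y"
  then obtain p q where "x = (v @ [0]) @ p" "y = (v @ [0]) @ q" by (auto simp: prefix_def)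
  then show ?thesis by (simp add: vless_def)
qed

lemma vless_not_in_graft:
  "\<not> in_graft v x \<Longrightarrow> \<not> in_graft v y \<Longrightarrow>
     vless x y \<longleftrightarrow> vless (graft_unshift v x) (graft_unshift v y)"
  by (simp add: vless_def prefix_graft_unshift_iff graft_unshift_eq_iff)

lemma vless_into_graft:
  "\<not> in_graft v x \<Longrightarrow> in_graft v y \<Longrightarrow> vless x y \<longleftrightarrow> prefix (graft_unshift v x) v"
  by (metis prefix_into_graft_iff vless_def)

lemma not_vless_out_of_graft: "in_graft v x \<Longrightarrow> \<not> in_graft v y \<Longrightarrow> \<not> vless x y"
  by (meson prefix_order.trans vless_def)

section \<open>Entries of \<open>\<Psi>(\<tau>)\<close>\<close>

text \<open>
  A planar tree \<open>\<rho>\<close> occurring in \<open>\<Psi>(\<tau>)\<close>, a bijection from \<open>V(\<rho>)\<close> onto \<open>V(\<tau>)\<close>, and the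
  image under it of the tree order of \<open>\<rho>\<close>.
\<close>
record entry =
  etree :: ptree
  emap :: "vertex \<Rightarrow> vertex"
  erel :: "vertex rel"

definition valid_entry :: "ptree \<Rightarrow> entry \<Rightarrow> bool" where
  "valid_entry t e \<longleftrightarrow> bij_betw (emap e) (verts (etree e)) (verts t) \<and>
     erel e = rel_image (emap e) (tree_rel (etree e)) \<and> tree_rel t \<subseteq> erel e \<and> erel e \<subseteq> lll_rel t"

definition graft_map ::
    "vertex \<Rightarrow> (vertex \<Rightarrow> vertex) \<Rightarrow> (vertex \<Rightarrow> vertex) \<Rightarrow> vertex \<Rightarrow> vertex" where
  "graft_map v \<theta>1 \<theta>2 x =
     (if in_graft v x then 0 # \<theta>1 (graft_part v x) else shift_up (\<theta>2 (graft_unshift v x)))"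

text \<open>Grafting onto the vertex labelled \<open>p\<close> puts \<open>p\<close> and its predecessors below the new branch.\<close>
definition graft_rel :: "ptree \<Rightarrow> vertex rel \<Rightarrow> vertex rel \<Rightarrow> vertex \<Rightarrow> vertex rel" where
  "graft_rel t1 R1 R2 p = map_prod ((#) 0) ((#) 0) ` R1 \<union> map_prod shift_up shift_up ` R2 \<union>
     {(shift_up a, 0 # b) | a b. (a = p \<or> (a, p) \<in> R2) \<and> b \<in> verts t1}"

definition graft_entry :: "ptree \<Rightarrow> entry \<Rightarrow> entry \<Rightarrow> vertex \<Rightarrow> entry" where
  "graft_entry t1 e1 e2 v =
     \<lparr>etree = graft_at (etree e1) v (etree e2), emap = graft_map v (emap e1) (emap e2),
      erel = graft_rel t1 (erel e1) (erel e2) (emap e2 v)\<rparr>"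

lemma graft_entry_simps [simp]:
  "etree (graft_entry t1 e1 e2 v) = graft_at (etree e1) v (etree e2)"
  "emap (graft_entry t1 e1 e2 v) = graft_map v (emap e1) (emap e2)"
  "erel (graft_entry t1 e1 e2 v) = graft_rel t1 (erel e1) (erel e2) (emap e2 v)"
  by (simp_all add: graft_entry_def)

function entries :: "ptree \<Rightarrow> entry set" where
  "entries (Node []) = {\<lparr>etree = Node [], emap = id, erel = {}\<rparr>}"
| "entries (Node (t1 # ts)) = (\<lambda>(e1, e2, v). graft_entry t1 e1 e2 v) `
     (SIGMA e1:entries t1. SIGMA e2:entries (Node ts). verts (etree e2))"
  by pat_completeness auto
termination
  by (relation "measure size") auto

lemma finite_entries: "finite (entries t)"
  by (induction t rule: entries.induct) (auto intro!: finite_SigmaI simp: finite_verts)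

lemma graft_rel_cases:
  assumes "z \<in> graft_rel t1 R1 R2 p"
  obtains (left) a b where "z = (0 # a, 0 # b)" "(a, b) \<in> R1"
    | (right) a b where "z = (shift_up a, shift_up b)" "(a, b) \<in> R2"
    | (across) a b where "z = (shift_up a, 0 # b)" "a = p \<or> (a, p) \<in> R2" "b \<in> verts t1"
  using assms unfolding graft_rel_def by blast

lemma Cons_0_mem_graft_rel [simp]: "(0 # a, 0 # b) \<in> graft_rel t1 R1 R2 p \<longleftrightarrow> (a, b) \<in> R1"
  by (auto simp: graft_rel_def)

lemma shift_up_mem_graft_rel [simp]:
  "(shift_up a, shift_up b) \<in> graft_rel t1 R1 R2 p \<longleftrightarrow> (a, b) \<in> R2"
  by (auto simp: graft_rel_def)

lemma shift_up_Cons_0_mem_graft_rel: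
  "(shift_up a, 0 # b) \<in> graft_rel t1 R1 R2 p \<longleftrightarrow> (a = p \<or> (a, p) \<in> R2) \<and> b \<in> verts t1"
  by (auto simp: graft_rel_def)

lemma tree_rel_subset_graft_rel:
  assumes "tree_rel t1 \<subseteq> R1" "tree_rel (Node ts) \<subseteq> R2" "p \<in> verts (Node ts)"
  shows "tree_rel (Node (t1 # ts)) \<subseteq> graft_rel t1 R1 R2 p"
proof
  fix z assume "z \<in> tree_rel (Node (t1 # ts))"
  then obtain x y where z: "z = (x, y)" "vless x y"
    and xy: "x \<in> verts (Node (t1 # ts))" "y \<in> verts (Node (t1 # ts))"
    by (auto simp: tree_rel_def)
  have root: "[] = p \<or> ([], p) \<in> R2"
    using assms(2,3) by (cases "p = []") (auto simp: tree_rel_def)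
  from xy show "z \<in> graft_rel t1 R1 R2 p"
    unfolding verts_Node_Cons
    using z assms(1,2) root shift_up_Cons_0_mem_graft_rel[of "[]"]
    by (auto simp: tree_rel_def shift_up_Cons_0_mem_graft_rel)
qed

lemma graft_rel_subset_lll_rel:
  assumes "R1 \<subseteq> lll_rel t1" "R2 \<subseteq> lll_rel (Node ts)" "p \<in> verts (Node ts)"
  shows "graft_rel t1 R1 R2 p \<subseteq> lll_rel (Node (t1 # ts))"
proof
  fix z assume "z \<in> graft_rel t1 R1 R2 p"
  then show "z \<in> lll_rel (Node (t1 # ts))"
    by (cases rule: graft_rel_cases)
      (use assms in \<open>auto simp: lll_rel_def simp del: llless.simps\<close>)
qed

lemma inj_on_graft_map:
  assumes i1: "inj_on \<theta>1 (verts r1)" and i2: "inj_on \<theta>2 (verts r2)" and v: "v \<in> verts r2"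
  shows "inj_on (graft_map v \<theta>1 \<theta>2) (verts (graft_at r1 v r2))"
proof (rule inj_onI)
  note vr = verts_graft_at[OF v, of _ r1]
  fix x y assume x: "x \<in> verts (graft_at r1 v r2)" and y: "y \<in> verts (graft_at r1 v r2)"
    and eq: "graft_map v \<theta>1 \<theta>2 x = graft_map v \<theta>1 \<theta>2 y"
  consider "in_graft v x" "in_graft v y" | "in_graft v x \<noteq> in_graft v y"
    | "\<not> in_graft v x" "\<not> in_graft v y" by blast
  then show "x = y"
  proof cases
    case 1
    then have "graft_part v x = graft_part v y"
      using eq x y vr i1 by (auto simp: graft_map_def inj_on_def)
    then show ?thesis using 1 in_graft_decomp by metis
  next
    case 2
    then show ?thesis using eq by (auto simp: graft_map_def)
  next
    case 3
    then have "graft_unshift v x = graft_unshift v y"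
      using eq x y vr i2 by (auto simp: graft_map_def inj_on_def)
    then show ?thesis using 3 graft_unshift_eq_iff by blast
  qed
qed

lemma graft_map_image:
  assumes im1: "\<theta>1 ` verts r1 = verts t1" and im2: "\<theta>2 ` verts r2 = verts (Node ts)"
    and v: "v \<in> verts r2"
  shows "graft_map v \<theta>1 \<theta>2 ` verts (graft_at r1 v r2) = verts (Node (t1 # ts))"
proof
  let ?\<theta> = "graft_map v \<theta>1 \<theta>2"
  note vr = verts_graft_at[OF v, of _ r1]
  show "?\<theta> ` verts (graft_at r1 v r2) \<subseteq> verts (Node (t1 # ts))"
    using vr im1 im2 by (auto simp: graft_map_def)
  show "verts (Node (t1 # ts)) \<subseteq> ?\<theta> ` verts (graft_at r1 v r2)"
  proof
    fix z assume "z \<in> verts (Node (t1 # ts))"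
    then consider (left) q where "z = 0 # \<theta>1 q" "q \<in> verts r1"
      | (right) q where "z = shift_up (\<theta>2 q)" "q \<in> verts r2"
      unfolding verts_Node_Cons im1[symmetric] im2[symmetric] by blast
    then show "z \<in> ?\<theta> ` verts (graft_at r1 v r2)"
    proof cases
      case left
      have "v @ 0 # q \<in> verts (graft_at r1 v r2)" using vr left by simp
      moreover have "?\<theta> (v @ 0 # q) = z" using left by (simp add: graft_map_def)
      ultimately show ?thesis by (metis image_eqI)
    next
      case right
      have "graft_shift v q \<in> verts (graft_at r1 v r2)" using vr right by simp
      moreover have "?\<theta> (graft_shift v q) = z" using right by (simp add: graft_map_def)
      ultimately show ?thesis by (metis image_eqI)
    qed
  qed
qed

lemma bij_betw_graft_map:
  assumes "bij_betw \<theta>1 (verts r1) (verts t1)" "bij_betw \<theta>2 (verts r2) (verts (Node ts))"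
    and "v \<in> verts r2"
  shows "bij_betw (graft_map v \<theta>1 \<theta>2) (verts (graft_at r1 v r2)) (verts (Node (t1 # ts)))"
proof -
  have i1: "inj_on \<theta>1 (verts r1)" and im1: "\<theta>1 ` verts r1 = verts t1"
    and i2: "inj_on \<theta>2 (verts r2)" and im2: "\<theta>2 ` verts r2 = verts (Node ts)"
    using assms(1,2) by (simp_all add: bij_betw_def)
  show ?thesis
    unfolding bij_betw_def
    using inj_on_graft_map[OF i1 i2 assms(3)] graft_map_image[OF im1 im2 assms(3)] by blast
qed

lemma rel_image_graft_map_subset:
  assumes b1: "bij_betw \<theta>1 (verts r1) (verts t1)"
    and b2: "bij_betw \<theta>2 (verts r2) (verts (Node ts))" and v: "v \<in> verts r2"
  shows "rel_image (graft_map v \<theta>1 \<theta>2) (tree_rel (graft_at r1 v r2)) \<subseteq>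
    graft_rel t1 (rel_image \<theta>1 (tree_rel r1)) (rel_image \<theta>2 (tree_rel r2)) (\<theta>2 v)"
    (is "?L \<subseteq> ?R")
proof
  let ?\<theta> = "graft_map v \<theta>1 \<theta>2"
  note vr = verts_graft_at[OF v, of _ r1]
  have i1: "inj_on \<theta>1 (verts r1)" and i2: "inj_on \<theta>2 (verts r2)"
    and im1: "\<theta>1 ` verts r1 = verts t1"
    using b1 b2 by (auto simp: bij_betw_def)
  fix z assume "z \<in> ?L"
  then obtain x y where z: "z = (?\<theta> x, ?\<theta> y)" and xy: "vless x y"
    and x: "x \<in> verts (graft_at r1 v r2)" and y: "y \<in> verts (graft_at r1 v r2)"
    by (auto simp: rel_image_def tree_rel_def)
  consider "in_graft v x" "in_graft v y" | "\<not> in_graft v x" "in_graft v y"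
    | "\<not> in_graft v x" "\<not> in_graft v y"
    using not_vless_out_of_graft xy by blast
  then show "z \<in> ?R"
  proof cases
    case 1
    then have "(\<theta>1 (graft_part v x), \<theta>1 (graft_part v y)) \<in> rel_image \<theta>1 (tree_rel r1)"
      using mem_rel_image_tree_rel[OF i1] x y vr vless_in_graft xy by auto
    then show ?thesis using z 1 by (simp add: graft_map_def)
  next
    case 2
    have u: "graft_unshift v x \<in> verts r2" using x 2 vr by auto
    have "prefix (graft_unshift v x) v" using vless_into_graft 2 xy by blast
    then have "graft_unshift v x = v \<or> vless (graft_unshift v x) v" by (auto simp: vless_def)
    then have "\<theta>2 (graft_unshift v x) = \<theta>2 v \<or>
        (\<theta>2 (graft_unshift v x), \<theta>2 v) \<in> rel_image \<theta>2 (tree_rel r2)"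
      using mem_rel_image_tree_rel[OF i2 u v] by auto
    moreover have "\<theta>1 (graft_part v y) \<in> verts t1" using y 2 vr im1 by auto
    ultimately show ?thesis using z 2 by (simp add: graft_map_def shift_up_Cons_0_mem_graft_rel)
  next
    case 3
    then have "(\<theta>2 (graft_unshift v x), \<theta>2 (graft_unshift v y)) \<in> rel_image \<theta>2 (tree_rel r2)"
      using mem_rel_image_tree_rel[OF i2] x y vr vless_not_in_graft xy by auto
    then show ?thesis using z 3 by (simp add: graft_map_def)
  qed
qed

lemma graft_rel_subset_rel_image_graft_map:
  assumes b1: "bij_betw \<theta>1 (verts r1) (verts t1)"
    and b2: "bij_betw \<theta>2 (verts r2) (verts (Node ts))" and v: "v \<in> verts r2"
  shows "graft_rel t1 (rel_image \<theta>1 (tree_rel r1)) (rel_image \<theta>2 (tree_rel r2)) (\<theta>2 v) \<subseteq>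
    rel_image (graft_map v \<theta>1 \<theta>2) (tree_rel (graft_at r1 v r2))"
    (is "?R \<subseteq> ?L")
proof
  let ?\<theta> = "graft_map v \<theta>1 \<theta>2"
  note vr = verts_graft_at[OF v, of _ r1]
  have i2: "inj_on \<theta>2 (verts r2)" and im1: "\<theta>1 ` verts r1 = verts t1"
    using b1 b2 by (auto simp: bij_betw_def)
  fix z assume "z \<in> ?R"
  then show "z \<in> ?L"
  proof (cases rule: graft_rel_cases)
    case (left a b)
    then obtain a' b' where ab: "a = \<theta>1 a'" "b = \<theta>1 b'" "a' \<in> verts r1" "b' \<in> verts r1" "vless a' b'"
      by (auto simp: rel_image_def tree_rel_def)
    have "(v @ 0 # a', v @ 0 # b') \<in> tree_rel (graft_at r1 v r2)"
      using ab vr vless_in_graft[of v "v @ 0 # a'" "v @ 0 # b'"] by (auto simp: tree_rel_def)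
    moreover have "z = map_prod ?\<theta> ?\<theta> (v @ 0 # a', v @ 0 # b')"
      using left ab by (simp add: graft_map_def)
    ultimately show ?thesis unfolding rel_image_def by blast
  next
    case (right a b)
    then obtain a' b' where ab: "a = \<theta>2 a'" "b = \<theta>2 b'" "a' \<in> verts r2" "b' \<in> verts r2" "vless a' b'"
      by (auto simp: rel_image_def tree_rel_def)
    have "(graft_shift v a', graft_shift v b') \<in> tree_rel (graft_at r1 v r2)"
      using ab vr vless_not_in_graft[of v "graft_shift v a'" "graft_shift v b'"]
      by (auto simp: tree_rel_def)
    moreover have "z = map_prod ?\<theta> ?\<theta> (graft_shift v a', graft_shift v b')"
      using right ab by (simp add: graft_map_def)
    ultimately show ?thesis unfolding rel_image_def by blast
  next
    case (across a b)
    obtain b' where b': "b = \<theta>1 b'" "b' \<in> verts r1" using across im1 by auto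
    have "\<exists>a'. a = \<theta>2 a' \<and> a' \<in> verts r2 \<and> prefix a' v"
      using across(2) v i2 by (auto simp: rel_image_def tree_rel_def vless_def inj_on_def)
    then obtain a' where a': "a = \<theta>2 a'" "a' \<in> verts r2" "prefix a' v" by blast
    have "(graft_shift v a', v @ 0 # b') \<in> tree_rel (graft_at r1 v r2)"
      using a' b' vr vless_into_graft[of v "graft_shift v a'" "v @ 0 # b'"]
      by (auto simp: tree_rel_def)
    moreover have "z = map_prod ?\<theta> ?\<theta> (graft_shift v a', v @ 0 # b')"
      using across a' b' by (simp add: graft_map_def)
    ultimately show ?thesis unfolding rel_image_def by blast
  qed
qed

lemma rel_image_graft_map:
  assumes b1: "bij_betw \<theta>1 (verts r1) (verts t1)"
    and b2: "bij_betw \<theta>2 (verts r2) (verts (Node ts))" and v: "v \<in> verts r2"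
  shows "rel_image (graft_map v \<theta>1 \<theta>2) (tree_rel (graft_at r1 v r2)) =
    graft_rel t1 (rel_image \<theta>1 (tree_rel r1)) (rel_image \<theta>2 (tree_rel r2)) (\<theta>2 v)"
  using rel_image_graft_map_subset[OF assms] graft_rel_subset_rel_image_graft_map[OF assms] by (rule equalityI)

lemma valid_entry_graft_entry:
  assumes "valid_entry t1 e1" "valid_entry (Node ts) e2" and v: "v \<in> verts (etree e2)"
  shows "valid_entry (Node (t1 # ts)) (graft_entry t1 e1 e2 v)"
proof -
  have b1: "bij_betw (emap e1) (verts (etree e1)) (verts t1)"
    and R1: "erel e1 = rel_image (emap e1) (tree_rel (etree e1))"
    and s1: "tree_rel t1 \<subseteq> erel e1" and l1: "erel e1 \<subseteq> lll_rel t1"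
    using assms(1) by (auto simp: valid_entry_def)
  have b2: "bij_betw (emap e2) (verts (etree e2)) (verts (Node ts))"
    and R2: "erel e2 = rel_image (emap e2) (tree_rel (etree e2))"
    and s2: "tree_rel (Node ts) \<subseteq> erel e2" and l2: "erel e2 \<subseteq> lll_rel (Node ts)"
    using assms(2) by (auto simp: valid_entry_def)
  have p: "emap e2 v \<in> verts (Node ts)" using b2 v by (auto simp: bij_betw_def)
  show ?thesis
    unfolding valid_entry_def graft_entry_def
    using bij_betw_graft_map[OF b1 b2 v] rel_image_graft_map[OF b1 b2 v]
      tree_rel_subset_graft_rel[OF s1 s2 p] graft_rel_subset_lll_rel[OF l1 l2 p] R1 R2
    by simp
qed

lemma valid_entry_entries: "e \<in> entries t \<Longrightarrow> valid_entry t e"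
proof (induction t arbitrary: e rule: entries.induct)
  case 1
  then show ?case by (auto simp: valid_entry_def tree_rel_def lll_rel_def verts_Node rel_image_def)
next
  case (2 t1 ts)
  then show ?case by (auto intro: valid_entry_graft_entry)
qed

lemma valid_entry_erel_irrefl: "valid_entry t e \<Longrightarrow> (x, x) \<notin> erel e"
  by (auto simp: valid_entry_def lll_rel_def llless_irrefl)

lemma valid_entry_erel_trans: "valid_entry t e \<Longrightarrow> trans (erel e)"
  by (auto simp: valid_entry_def bij_betw_def intro: trans_rel_image_tree_rel)

lemma graft_rel_eqD:
  assumes eq: "graft_rel t1 R1 R2 p = graft_rel t1 R1' R2' p'"
    and irrefl: "\<And>x. (x, x) \<notin> R2" and trans: "trans R2"
  shows "R1 = R1'" "R2 = R2'" "p = p'"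
proof -
  have "(a, b) \<in> R1 \<longleftrightarrow> (a, b) \<in> R1'" for a b
    using Cons_0_mem_graft_rel[of a b t1 R1 R2 p] Cons_0_mem_graft_rel[of a b t1 R1' R2' p'] eq
    by simp
  then show "R1 = R1'" by auto
  have "(a, b) \<in> R2 \<longleftrightarrow> (a, b) \<in> R2'" for a b
    using shift_up_mem_graft_rel[of a b t1 R1 R2 p] shift_up_mem_graft_rel[of a b t1 R1' R2' p'] eq
    by simp
  then show R2: "R2 = R2'" by auto
  have pred: "a = p \<or> (a, p) \<in> R2 \<longleftrightarrow> a = p' \<or> (a, p') \<in> R2" for a
    using shift_up_Cons_0_mem_graft_rel[of a "[]" t1 R1 R2 p]
      shift_up_Cons_0_mem_graft_rel[of a "[]" t1 R1' R2' p'] eq R2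
    by simp
  show "p = p'"
  proof (rule ccontr)
    assume "p \<noteq> p'"
    then have "(p, p') \<in> R2" "(p', p) \<in> R2" using pred[of p] pred[of p'] by auto
    then show False using irrefl trans by (meson transD)
  qed
qed

lemma inj_on_erel_graft_entry:
  assumes inj1: "inj_on erel (entries t1)" and inj2: "inj_on erel (entries (Node ts))"
  shows "inj_on (erel \<circ> (\<lambda>(e1, e2, v). graft_entry t1 e1 e2 v))
    (SIGMA e1:entries t1. SIGMA e2:entries (Node ts). verts (etree e2))" (is "inj_on ?f ?D")
proof (rule inj_onI)
  fix d d' assume "d \<in> ?D" "d' \<in> ?D" and eq: "?f d = ?f d'"
  then obtain e1 e2 v e1' e2' v' where d: "d = (e1, e2, v)" "d' = (e1', e2', v')"
    and e1: "e1 \<in> entries t1" "e1' \<in> entries t1"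
    and e2: "e2 \<in> entries (Node ts)" "e2' \<in> entries (Node ts)"
    and v: "v \<in> verts (etree e2)" "v' \<in> verts (etree e2')"
    by auto
  have valid: "valid_entry (Node ts) e2" using e2 valid_entry_entries by blast
  have "graft_rel t1 (erel e1) (erel e2) (emap e2 v) = graft_rel t1 (erel e1') (erel e2') (emap e2' v')"
    using eq d by simp
  note G = graft_rel_eqD[OF this valid_entry_erel_irrefl[OF valid] valid_entry_erel_trans[OF valid]]
  have "e1 = e1'" "e2 = e2'" using G(1,2) e1 e2 inj1 inj2 by (auto dest: inj_onD)
  moreover have "inj_on (emap e2) (verts (etree e2))"
    using valid by (simp add: valid_entry_def bij_betw_def)
  ultimately have "v = v'" using G(3) v by (auto dest: inj_onD)
  with \<open>e1 = e1'\<close> \<open>e2 = e2'\<close> show "d = d'" using d by simp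
qed

lemma inj_on_erel_entries: "inj_on erel (entries t)"
proof (induction t rule: entries.induct)
  case (2 t1 ts)
  then show ?case by (simp only: entries.simps) (rule inj_on_imageI[OF inj_on_erel_graft_entry])
qed simp

section \<open>Every admissible relation comes from an entry\<close>

definition admissible :: "ptree \<Rightarrow> vertex rel \<Rightarrow> bool" where
  "admissible t R \<longleftrightarrow> trans R \<and>
     (\<forall>x y z. (x, z) \<in> R \<longrightarrow> (y, z) \<in> R \<longrightarrow> x = y \<or> (x, y) \<in> R \<or> (y, x) \<in> R) \<and>
     tree_rel t \<subseteq> R \<and> R \<subseteq> lll_rel t"

lemma admissibleD:
  assumes "admissible t R"
  shows "trans R" "\<And>x y z. (x, z) \<in> R \<Longrightarrow> (y, z) \<in> R \<Longrightarrow> x = y \<or> (x, y) \<in> R \<or> (y, x) \<in> R"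
    "tree_rel t \<subseteq> R" "R \<subseteq> lll_rel t"
  using assms unfolding admissible_def by blast+

lemma admissible_Cons_left:
  assumes "admissible (Node (t1 # ts)) R"
  shows "admissible t1 {(a, b). (0 # a, 0 # b) \<in> R}"
  unfolding admissible_def
proof (intro conjI allI impI)
  note adm = admissibleD[OF assms]
  show "trans {(a, b). (0 # a, 0 # b) \<in> R}" using adm(1) by (auto simp: trans_def)
  show "x = y \<or> (x, y) \<in> {(a, b). (0 # a, 0 # b) \<in> R} \<or> (y, x) \<in> {(a, b). (0 # a, 0 # b) \<in> R}"
    if "(x, z) \<in> {(a, b). (0 # a, 0 # b) \<in> R}" "(y, z) \<in> {(a, b). (0 # a, 0 # b) \<in> R}" for x y z
    using that adm(2) by blast
  show "tree_rel t1 \<subseteq> {(a, b). (0 # a, 0 # b) \<in> R}"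
    using adm(3) by (fastforce simp: tree_rel_def)
  show "{(a, b). (0 # a, 0 # b) \<in> R} \<subseteq> lll_rel t1"
    using adm(4) by (fastforce simp: lll_rel_def simp del: llless.simps)
qed

lemma admissible_Cons_right:
  assumes "admissible (Node (t1 # ts)) R"
  shows "admissible (Node ts) {(a, b). (shift_up a, shift_up b) \<in> R}"
  unfolding admissible_def
proof (intro conjI allI impI)
  note adm = admissibleD[OF assms]
  show "trans {(a, b). (shift_up a, shift_up b) \<in> R}" using adm(1) by (auto simp: trans_def)
  show "x = y \<or> (x, y) \<in> {(a, b). (shift_up a, shift_up b) \<in> R} \<or>
      (y, x) \<in> {(a, b). (shift_up a, shift_up b) \<in> R}"
    if "(x, z) \<in> {(a, b). (shift_up a, shift_up b) \<in> R}"
      "(y, z) \<in> {(a, b). (shift_up a, shift_up b) \<in> R}" for x y z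
    using that adm(2) by fastforce
  show "tree_rel (Node ts) \<subseteq> {(a, b). (shift_up a, shift_up b) \<in> R}"
    using adm(3) by (fastforce simp: tree_rel_def)
  show "{(a, b). (shift_up a, shift_up b) \<in> R} \<subseteq> lll_rel (Node ts)"
    using adm(4) by (fastforce simp: lll_rel_def simp del: llless.simps)
qed

lemma finite_chain_has_greatest:
  assumes "finite P" "P \<noteq> {}" "\<forall>x\<in>P. \<forall>y\<in>P. x = y \<or> (x, y) \<in> R \<or> (y, x) \<in> R" "trans R"
  shows "\<exists>m\<in>P. \<forall>x\<in>P. x = m \<or> (x, m) \<in> R"
  using assms
proof (induction P rule: finite_ne_induct)
  case (insert x F)
  then obtain m where m: "m \<in> F" "\<forall>y\<in>F. y = m \<or> (y, m) \<in> R" by auto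
  show ?case
  proof (cases "(m, x) \<in> R")
    case True
    then have "\<forall>y\<in>insert x F. y = x \<or> (y, x) \<in> R"
      using m insert.prems(2) by (metis insertE transD)
    then show ?thesis by blast
  next
    case False
    moreover have "x \<noteq> m" using insert.hyps m by blast
    ultimately have "(x, m) \<in> R" using insert.prems(1) m by blast
    then show ?thesis using m by blast
  qed
qed simp

text \<open>The root of the leftmost branch has a greatest predecessor, which lies outside that branch.\<close>
lemma admissible_Cons_root_pred:
  assumes adm: "admissible (Node (t1 # ts)) R"
  obtains p where "p \<in> verts (Node ts)"
    "\<And>a. (shift_up a, [0]) \<in> R \<longleftrightarrow> a = p \<or> (shift_up a, shift_up p) \<in> R"
proof -
  let ?\<tau> = "Node (t1 # ts)"
  note tr = admissibleD(1)[OF adm] and chain = admissibleD(2)[OF adm]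
    and sub = admissibleD(3)[OF adm] and sup = admissibleD(4)[OF adm]
  define P where "P = {x. (x, [0]) \<in> R}"
  have "P \<subseteq> verts ?\<tau>" using sup unfolding P_def lll_rel_def by blast
  then have "finite P" using finite_verts finite_subset by blast
  have "([], [0]) \<in> tree_rel ?\<tau>" by (simp add: tree_rel_def)
  then have "P \<noteq> {}" using sub unfolding P_def by blast
  have "\<forall>x\<in>P. \<forall>y\<in>P. x = y \<or> (x, y) \<in> R \<or> (y, x) \<in> R" using chain unfolding P_def by blast
  then obtain m where m: "m \<in> P" "\<forall>x\<in>P. x = m \<or> (x, m) \<in> R"
    using finite_chain_has_greatest[OF \<open>finite P\<close> \<open>P \<noteq> {}\<close> _ tr] by blast
  then have mR: "(m, [0]) \<in> R" unfolding P_def by simp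
  then have "m \<in> verts ?\<tau>" and "llless ?\<tau> m [0]" using sup unfolding lll_rel_def by blast+
  have "m \<notin> (#) 0 ` verts t1"
    using \<open>llless ?\<tau> m [0]\<close> llless_Nil_right llless_Node_Cons(1)[of t1 ts _ "[]"] by blast
  then obtain p where p: "m = shift_up p" "p \<in> verts (Node ts)"
    using \<open>m \<in> verts ?\<tau>\<close> unfolding verts_Node_Cons by blast
  show thesis
  proof (rule that[OF p(2)])
    fix a
    show "(shift_up a, [0]) \<in> R \<longleftrightarrow> a = p \<or> (shift_up a, shift_up p) \<in> R"
    proof
      assume "(shift_up a, [0]) \<in> R"
      then have "shift_up a = m \<or> (shift_up a, m) \<in> R" using m(2) unfolding P_def by blast
      then show "a = p \<or> (shift_up a, shift_up p) \<in> R" using p(1) by simp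
    next
      assume "a = p \<or> (shift_up a, shift_up p) \<in> R"
      then show "(shift_up a, [0]) \<in> R" using mR p(1) tr by (metis transD)
    qed
  qed
qed

lemma admissible_Cons_below_left_root:
  assumes adm: "admissible (Node (t1 # ts)) R" and b: "b \<in> verts t1"
  shows "([0], 0 # b) \<in> R \<or> b = []"
  using admissibleD(3)[OF adm] b by (auto simp: tree_rel_def)

lemma admissible_Cons_across:
  assumes adm: "admissible (Node (t1 # ts)) R"
    and ab: "(shift_up a, 0 # b) \<in> R" "b \<in> verts t1"
  shows "(shift_up a, [0]) \<in> R"
proof (cases "b = []")
  case False
  then have "([0], 0 # b) \<in> R" using admissible_Cons_below_left_root[OF adm ab(2)] by blast
  then consider "shift_up a = [0]" | "(shift_up a, [0]) \<in> R" | "([0], shift_up a) \<in> R"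
    using admissibleD(2)[OF adm ab(1)] by blast
  then show ?thesis
  proof cases
    case 3
    then have "llless (Node (t1 # ts)) (0 # []) (shift_up a)"
      using admissibleD(4)[OF adm] unfolding lll_rel_def by blast
    then show ?thesis by (simp del: llless.simps)
  qed simp_all
qed (use ab in simp)

lemma admissible_Cons_eq_graft_rel:
  assumes adm: "admissible (Node (t1 # ts)) R"
    and p: "\<And>a. (shift_up a, [0]) \<in> R \<longleftrightarrow> a = p \<or> (shift_up a, shift_up p) \<in> R"
  shows "R = graft_rel t1 {(a, b). (0 # a, 0 # b) \<in> R} {(a, b). (shift_up a, shift_up b) \<in> R} p"
    (is "R = ?G")
proof
  let ?\<tau> = "Node (t1 # ts)"
  show "R \<subseteq> ?G"
  proof
    fix z assume zR: "z \<in> R"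
    then obtain x y where z: "z = (x, y)" "x \<in> verts ?\<tau>" "y \<in> verts ?\<tau>" "llless ?\<tau> x y"
      using admissibleD(4)[OF adm] by (auto simp: lll_rel_def)
    from z(2,3) consider
        (left) a b where "x = 0 # a" "y = 0 # b"
      | (left_right) a b where "x = 0 # a" "y = shift_up b"
      | (across) a b where "x = shift_up a" "y = 0 # b" "b \<in> verts t1"
      | (right) a b where "x = shift_up a" "y = shift_up b"
      unfolding verts_Node_Cons by blast
    then show "z \<in> ?G"
    proof cases
      case left_right
      then show ?thesis using z(4) by (simp del: llless.simps)
    next
      case across
      then have "(shift_up a, 0 # b) \<in> R" using z(1) zR by simp
      then have "(shift_up a, [0]) \<in> R" using admissible_Cons_across[OF adm] across(3) by blast
      then have "a = p \<or> (a, p) \<in> {(a, b). (shift_up a, shift_up b) \<in> R}" using p by simp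
      then show ?thesis using across z(1) by (simp add: shift_up_Cons_0_mem_graft_rel)
    qed (use z(1) zR in simp_all)
  qed
  show "?G \<subseteq> R"
  proof
    fix z assume "z \<in> ?G"
    then show "z \<in> R"
    proof (cases rule: graft_rel_cases)
      case (across a b)
      then have a0: "(shift_up a, [0]) \<in> R" using p by simp
      show ?thesis
      proof (cases "b = []")
        case False
        then have "([0], 0 # b) \<in> R" using admissible_Cons_below_left_root[OF adm across(3)] by blast
        then show ?thesis using a0 admissibleD(1)[OF adm] across(1) by (metis transD)
      qed (use a0 across(1) in simp)
    qed simp_all
  qed
qed

lemma admissible_imp_entry: "admissible t R \<Longrightarrow> \<exists>e\<in>entries t. erel e = R"
proof (induction t arbitrary: R rule: entries.induct)
  case 1
  have "lll_rel (Node []) = {}" by (simp add: lll_rel_def verts_Node)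
  then show ?case using 1 by (simp add: admissible_def)
next
  case (2 t1 ts)
  obtain e1 where e1: "e1 \<in> entries t1" "erel e1 = {(a, b). (0 # a, 0 # b) \<in> R}"
    using 2(1) admissible_Cons_left[OF 2(3)] by blast
  obtain e2 where e2: "e2 \<in> entries (Node ts)" "erel e2 = {(a, b). (shift_up a, shift_up b) \<in> R}"
    using 2(2) admissible_Cons_right[OF 2(3)] by blast
  obtain p where p: "p \<in> verts (Node ts)"
    "\<And>a. (shift_up a, [0]) \<in> R \<longleftrightarrow> a = p \<or> (shift_up a, shift_up p) \<in> R"
    using admissible_Cons_root_pred[OF 2(3)] by blast
  have "p \<in> emap e2 ` verts (etree e2)"
    using valid_entry_entries[OF e2(1)] p(1) unfolding valid_entry_def bij_betw_def by blast
  then obtain v where v: "v \<in> verts (etree e2)" "emap e2 v = p" by blast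
  have "erel (graft_entry t1 e1 e2 v) =
      graft_rel t1 {(a, b). (0 # a, 0 # b) \<in> R} {(a, b). (shift_up a, shift_up b) \<in> R} p"
    using e1(2) e2(2) v(2) by simp
  also have "\<dots> = R" by (rule admissible_Cons_eq_graft_rel[OF 2(3) p(2), symmetric])
  moreover have "graft_entry t1 e1 e2 v \<in> entries (Node (t1 # ts))"
    unfolding entries.simps using e1(1) e2(1) v(1)
    by (intro image_eqI[where x = "(e1, e2, v)"]) simp_all
  ultimately show ?case by blast
qed

section \<open>The coefficients of \<open>\<Psi>\<close> count entries\<close>

lemma Psi_basis_eq_sum_entries: "Psi_basis t = (\<Sum>e\<in>entries t. frag_of (etree e))"
proof (induction t rule: entries.induct)
  case (2 t1 ts)
  let ?D = "SIGMA e1:entries t1. SIGMA e2:entries (Node ts). verts (etree e2)"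
  let ?g = "\<lambda>(e1, e2, v). graft_entry t1 e1 e2 v"
  have fin: "finite (entries t1)" "finite (entries (Node ts))" by (simp_all add: finite_entries)
  have inj: "inj_on ?g ?D"
    using inj_on_erel_graft_entry[OF inj_on_erel_entries inj_on_erel_entries] by (rule inj_on_imageI2)
  have "Psi_basis (Node (t1 # ts)) = lgraft (Psi_basis t1) (Psi_basis (Node ts))" by simp
  also have "\<dots> = (\<Sum>e1\<in>entries t1. \<Sum>e2\<in>entries (Node ts). lgraft_basis (etree e1) (etree e2))"
    unfolding 2 lgraft_def using fin by (simp add: frag_extend_sum comp_def)
  also have "\<dots> = (\<Sum>e1\<in>entries t1. \<Sum>e2\<in>entries (Node ts). \<Sum>v\<in>verts (etree e2).
      frag_of (etree (graft_entry t1 e1 e2 v)))"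
    by (simp add: lgraft_basis_def)
  also have "\<dots> = (\<Sum>d\<in>?D. frag_of (etree (?g d)))"
    using fin finite_verts by (simp add: sum.Sigma split_def)
  also have "\<dots> = (\<Sum>e\<in>?g ` ?D. frag_of (etree e))"
    by (simp add: sum.reindex[OF inj])
  finally show ?case by simp
qed simp

lemma lookup_Psibar_frag_of:
  "Poly_Mapping.lookup (Psibar (frag_of \<tau>)) s = int (card {e \<in> entries \<tau>. pi_tree (etree e) = s})"
proof -
  have "Psibar (frag_of \<tau>) = (\<Sum>e\<in>entries \<tau>. frag_of (pi_tree (etree e)))"
    unfolding Psibar_def Psi_def pi_lin_def using finite_entries[of \<tau>]
    by (simp add: Psi_basis_eq_sum_entries frag_extend_sum comp_def)
  then have "Poly_Mapping.lookup (Psibar (frag_of \<tau>)) s =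
      (\<Sum>e\<in>entries \<tau>. if pi_tree (etree e) = s then 1 else 0)"
    by (simp add: lookup_sum eq_commute)
  also have "\<dots> = int (card {e \<in> entries \<tau>. pi_tree (etree e) = s})"
    using finite_entries[of \<tau>] by (simp add: sum.If_cases Int_def)
  finally show ?thesis .
qed

section \<open>Isomorphisms of rooted trees\<close>

definition tree_isos :: "ptree \<Rightarrow> ptree \<Rightarrow> (vertex \<Rightarrow> vertex) set" where
  "tree_isos \<sigma> \<rho> = {\<psi> \<in> verts \<sigma> \<rightarrow>\<^sub>E verts \<rho>. bij_betw \<psi> (verts \<sigma>) (verts \<rho>) \<and>
      (\<forall>a\<in>verts \<sigma>. \<forall>b\<in>verts \<sigma>. vless a b \<longleftrightarrow> vless (\<psi> a) (\<psi> b))}"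

lemma tree_isosD:
  assumes "\<psi> \<in> tree_isos \<sigma> \<rho>"
  shows "\<psi> \<in> extensional (verts \<sigma>)" "bij_betw \<psi> (verts \<sigma>) (verts \<rho>)"
    "\<And>a b. a \<in> verts \<sigma> \<Longrightarrow> b \<in> verts \<sigma> \<Longrightarrow> vless a b \<longleftrightarrow> vless (\<psi> a) (\<psi> b)"
  using assms unfolding tree_isos_def PiE_def by blast+

lemma finite_tree_isos: "finite (tree_isos \<sigma> \<rho>)"
proof (rule finite_subset)
  show "tree_isos \<sigma> \<rho> \<subseteq> verts \<sigma> \<rightarrow>\<^sub>E verts \<rho>" unfolding tree_isos_def by auto
  show "finite (verts \<sigma> \<rightarrow>\<^sub>E verts \<rho>)" by (intro finite_PiE finite_verts)
qed

lemma tree_isos_comp: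
  assumes "\<psi> \<in> tree_isos \<sigma> \<rho>" "\<chi> \<in> tree_isos \<rho> \<kappa>"
  shows "restrict (\<chi> \<circ> \<psi>) (verts \<sigma>) \<in> tree_isos \<sigma> \<kappa>"
proof -
  note p = tree_isosD[OF assms(1)] and c = tree_isosD[OF assms(2)]
  have "bij_betw (restrict (\<chi> \<circ> \<psi>) (verts \<sigma>)) (verts \<sigma>) (verts \<kappa>)"
    using bij_betw_trans[OF p(2) c(2)] by (rule bij_betw_cong[THEN iffD1, rotated]) simp
  moreover have "\<psi> a \<in> verts \<rho>" if "a \<in> verts \<sigma>" for a using p(2) that by (auto simp: bij_betw_def)
  ultimately show ?thesis unfolding tree_isos_def using p(3) c(3) by (auto simp: bij_betw_def)
qed

lemma tree_isos_inv:
  assumes "\<psi> \<in> tree_isos \<sigma> \<rho>"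
  shows "restrict (inv_into (verts \<sigma>) \<psi>) (verts \<rho>) \<in> tree_isos \<rho> \<sigma>"
proof -
  note p = tree_isosD[OF assms]
  have "bij_betw (restrict (inv_into (verts \<sigma>) \<psi>) (verts \<rho>)) (verts \<rho>) (verts \<sigma>)"
    using bij_betw_inv_into[OF p(2)] by (rule bij_betw_cong[THEN iffD1, rotated]) simp
  moreover have m: "inv_into (verts \<sigma>) \<psi> a \<in> verts \<sigma>" "\<psi> (inv_into (verts \<sigma>) \<psi> a) = a"
    if "a \<in> verts \<rho>" for a
    using p(2) that by (auto simp: bij_betw_def inv_into_into f_inv_into_f)
  moreover have "vless a b \<longleftrightarrow> vless (inv_into (verts \<sigma>) \<psi> a) (inv_into (verts \<sigma>) \<psi> b)"
    if "a \<in> verts \<rho>" "b \<in> verts \<rho>" for a b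
    using p(3)[OF m(1)[OF that(1)] m(1)[OF that(2)]] m that by simp
  ultimately show ?thesis unfolding tree_isos_def by (auto simp: bij_betw_def)
qed

lemma card_tree_isos_eq_automorphisms:
  assumes \<psi>0: "\<psi>0 \<in> tree_isos \<sigma> \<rho>"
  shows "card (tree_isos \<sigma> \<rho>) = card (tree_isos \<sigma> \<sigma>)"
proof -
  define \<psi>i where "\<psi>i = restrict (inv_into (verts \<sigma>) \<psi>0) (verts \<rho>)"
  have i: "\<psi>i \<in> tree_isos \<rho> \<sigma>" unfolding \<psi>i_def using tree_isos_inv[OF \<psi>0] .
  have m0: "\<psi>i (\<psi>0 a) = a" if "a \<in> verts \<sigma>" for a
    using tree_isosD(2)[OF \<psi>0] that unfolding \<psi>i_def bij_betw_def by (auto simp: inv_into_f_f)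
  have mi: "\<psi>0 (\<psi>i a) = a" if "a \<in> verts \<rho>" for a
    using tree_isosD(2)[OF \<psi>0] that unfolding \<psi>i_def bij_betw_def by (auto simp: f_inv_into_f)
  have into: "\<psi> a \<in> verts \<kappa>" if "\<psi> \<in> tree_isos \<sigma> \<kappa>" "a \<in> verts \<sigma>" for \<psi> \<kappa> a
    using that unfolding tree_isos_def by auto
  have "bij_betw (\<lambda>\<psi>. restrict (\<psi>i \<circ> \<psi>) (verts \<sigma>)) (tree_isos \<sigma> \<rho>) (tree_isos \<sigma> \<sigma>)"
  proof (rule bij_betw_byWitness[where f' = "\<lambda>\<psi>. restrict (\<psi>0 \<circ> \<psi>) (verts \<sigma>)"])
    show "\<forall>\<psi>\<in>tree_isos \<sigma> \<rho>. restrict (\<psi>0 \<circ> restrict (\<psi>i \<circ> \<psi>) (verts \<sigma>)) (verts \<sigma>) = \<psi>"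
      using tree_isosD(1) into mi by (fastforce simp: extensional_def)
    show "\<forall>\<psi>\<in>tree_isos \<sigma> \<sigma>. restrict (\<psi>i \<circ> restrict (\<psi>0 \<circ> \<psi>) (verts \<sigma>)) (verts \<sigma>) = \<psi>"
      using tree_isosD(1) into m0 by (fastforce simp: extensional_def)
    show "(\<lambda>\<psi>. restrict (\<psi>i \<circ> \<psi>) (verts \<sigma>)) ` tree_isos \<sigma> \<rho> \<subseteq> tree_isos \<sigma> \<sigma>"
      using tree_isos_comp[OF _ i] by blast
    show "(\<lambda>\<psi>. restrict (\<psi>0 \<circ> \<psi>) (verts \<sigma>)) ` tree_isos \<sigma> \<sigma> \<subseteq> tree_isos \<sigma> \<rho>"
      using tree_isos_comp[OF _ \<psi>0] by blast
  qed
  then show ?thesis by (rule bij_betw_same_card)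
qed

text \<open>Monotone bijections of a finite order are automatically order isomorphisms.\<close>
lemma sym_factor_eq_card_tree_isos: "sym_factor \<sigma> = card (tree_isos \<sigma> \<sigma>)"
proof -
  have "f \<in> tree_isos \<sigma> \<sigma>"
    if f: "f \<in> verts \<sigma> \<rightarrow>\<^sub>E verts \<sigma>" "bij_betw f (verts \<sigma>) (verts \<sigma>)"
      "\<forall>v\<in>verts \<sigma>. \<forall>w\<in>verts \<sigma>. vless v w \<longrightarrow> vless (f v) (f w)" for f
  proof -
    have inj: "inj_on f (verts \<sigma>)" and fim: "f ` verts \<sigma> = verts \<sigma>" using f(2) by (auto simp: bij_betw_def)
    have "map_prod f f ` tree_rel \<sigma> \<subseteq> tree_rel \<sigma>" using f(3) fim by (auto simp: tree_rel_def)
    moreover have "inj_on (map_prod f f) (tree_rel \<sigma>)" using inj by (auto simp: inj_on_def tree_rel_def)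
    ultimately have eq: "map_prod f f ` tree_rel \<sigma> = tree_rel \<sigma>"
      using endo_inj_surj[OF finite_tree_rel] by blast
    have "vless a b" if "a \<in> verts \<sigma>" "b \<in> verts \<sigma>" "vless (f a) (f b)" for a b
    proof -
      have "(f a, f b) \<in> tree_rel \<sigma>" using that fim by (auto simp: tree_rel_def)
      then have "(f a, f b) \<in> rel_image f (tree_rel \<sigma>)" using eq by (simp add: rel_image_def)
      then show ?thesis using mem_rel_image_tree_rel[OF inj that(1,2)] by simp
    qed
    then show ?thesis unfolding tree_isos_def using f by blast
  qed
  then have "{f \<in> verts \<sigma> \<rightarrow>\<^sub>E verts \<sigma>. bij_betw f (verts \<sigma>) (verts \<sigma>) \<and>
      (\<forall>v\<in>verts \<sigma>. \<forall>w\<in>verts \<sigma>. vless v w \<longrightarrow> vless (f v) (f w))} = tree_isos \<sigma> \<sigma>"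
    unfolding tree_isos_def by blast
  then show ?thesis unfolding sym_factor_def by simp
qed

lemma tree_iso_root: "\<psi> \<in> tree_isos \<sigma> \<rho> \<Longrightarrow> \<psi> [] = []"
proof (rule ccontr)
  assume \<psi>: "\<psi> \<in> tree_isos \<sigma> \<rho>" and "\<psi> [] \<noteq> []"
  obtain a where a: "a \<in> verts \<sigma>" "\<psi> a = []"
    using tree_isosD(2)[OF \<psi>] Nil_in_verts[of \<rho>] by (metis bij_betw_iff_bijections)
  then have "vless (\<psi> a) (\<psi> [])" using \<open>\<psi> [] \<noteq> []\<close> by simp
  then show False using tree_isosD(3)[OF \<psi> a(1) Nil_in_verts] by simp
qed

lemma prefix_tree_iso:
  assumes "\<psi> \<in> tree_isos \<sigma> \<rho>" "a \<in> verts \<sigma>" "b \<in> verts \<sigma>" "prefix a b"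
  shows "prefix (\<psi> a) (\<psi> b)"
  using assms tree_isosD(3)[OF assms(1-3)] unfolding vless_def by blast

lemma tree_iso_child:
  assumes \<psi>: "\<psi> \<in> tree_isos (Node ts) (Node us)" and j: "j < length ts"
  obtains i where "i < length us" "\<psi> [j] = [i]"
proof -
  note iso = tree_isosD[OF \<psi>]
  have jv: "[j] \<in> verts (Node ts)" using j by simp
  have into: "\<psi> [j] \<in> verts (Node us)" using iso(2) jv by (auto simp: bij_betw_def)
  obtain i r where ir: "\<psi> [j] = i # r"
    using tree_iso_root[OF \<psi>] iso(2) jv Nil_in_verts
    by (metis bij_betw_iff_bijections list.exhaust not_Cons_self2)
  have "r = []"
  proof (rule ccontr)
    assume "r \<noteq> []"
    have "[i] \<in> verts (Node us)" using into ir verts_prefix_closed[of _ _ "[i]"] by auto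
    then obtain a where a: "a \<in> verts (Node ts)" "\<psi> a = [i]"
      using iso(2) by (metis bij_betw_iff_bijections)
    have "vless a [j]" using iso(3)[OF a(1) jv] a ir \<open>r \<noteq> []\<close> by simp
    then have "a = []" by (cases a) auto
    then show False using a tree_iso_root[OF \<psi>] by simp
  qed
  then show thesis using that ir into by simp
qed

lemma tree_iso_preimage_branch:
  assumes \<psi>: "\<psi> \<in> tree_isos (Node ts) (Node us)" and i: "\<psi> [j] = [i]" "j < length ts"
    and a: "a \<in> verts (Node ts)" "\<psi> a = i # q'"
  obtains q where "a = j # q" "q \<in> verts (ts ! j)"
proof -
  note inj = inj_onD[OF bij_betw_imp_inj_on[OF tree_isosD(2)[OF \<psi>]]]
  obtain j' q where jq: "a = j' # q" using a tree_iso_root[OF \<psi>] by (cases a) auto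
  have j': "j' < length ts" "q \<in> verts (ts ! j')" using a(1) jq by simp_all
  obtain i' where i': "\<psi> [j'] = [i']" using tree_iso_child[OF \<psi> j'(1)] by blast
  have "prefix (\<psi> [j']) (i # q')" using prefix_tree_iso[OF \<psi>, of "[j']" a] a jq j' by simp
  then have "\<psi> [j'] = \<psi> [j]" using i i' by simp
  moreover have "[j'] \<in> verts (Node ts)" "[j] \<in> verts (Node ts)" using j' i(2) by simp_all
  ultimately have "j' = j" using inj by blast
  then show thesis using that jq j' by blast
qed

lemma tree_iso_branch:
  assumes \<psi>: "\<psi> \<in> tree_isos (Node ts) (Node us)" and j: "j < length ts" and i: "\<psi> [j] = [i]"
  shows "restrict (\<lambda>q. tl (\<psi> (j # q))) (verts (ts ! j)) \<in> tree_isos (ts ! j) (us ! i)"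
proof -
  note iso = tree_isosD[OF \<psi>]
  define \<psi>j where "\<psi>j = restrict (\<lambda>q. tl (\<psi> (j # q))) (verts (ts ! j))"
  have jv: "[j] \<in> verts (Node ts)" using j by simp
  have dj: "\<psi> (j # q) = i # \<psi>j q" if "q \<in> verts (ts ! j)" for q
  proof -
    have "prefix [i] (\<psi> (j # q))" using prefix_tree_iso[OF \<psi> jv, of "j # q"] i j that by simp
    then show ?thesis unfolding \<psi>j_def using that by (cases "\<psi> (j # q)") auto
  qed
  have "[i] \<in> verts (Node us)" using bij_betw_apply[OF iso(2) jv] i by simp
  then have "i < length us" by simp
  have bij: "bij_betw \<psi>j (verts (ts ! j)) (verts (us ! i))"
  proof (rule bij_betw_imageI)
    show "inj_on \<psi>j (verts (ts ! j))"
    proof (rule inj_onI)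
      fix q q' assume q: "q \<in> verts (ts ! j)" "q' \<in> verts (ts ! j)" "\<psi>j q = \<psi>j q'"
      then have "\<psi> (j # q) = \<psi> (j # q')" using dj by simp
      moreover have "j # q \<in> verts (Node ts)" "j # q' \<in> verts (Node ts)" using j q by simp_all
      ultimately show "q = q'" using inj_onD[OF bij_betw_imp_inj_on[OF iso(2)]] by blast
    qed
    show "\<psi>j ` verts (ts ! j) = verts (us ! i)"
    proof
      show "\<psi>j ` verts (ts ! j) \<subseteq> verts (us ! i)"
      proof
        fix x assume "x \<in> \<psi>j ` verts (ts ! j)"
        then obtain q where q: "q \<in> verts (ts ! j)" "x = \<psi>j q" by blast
        have "\<psi> (j # q) \<in> verts (Node us)" using bij_betw_apply[OF iso(2)] j q by simp
        then show "x \<in> verts (us ! i)" using dj[OF q(1)] q(2) by simp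
      qed
      show "verts (us ! i) \<subseteq> \<psi>j ` verts (ts ! j)"
      proof
        fix q' assume "q' \<in> verts (us ! i)"
        then have "i # q' \<in> verts (Node us)" using \<open>i < length us\<close> by simp
        then obtain a where a: "a \<in> verts (Node ts)" "\<psi> a = i # q'"
          using iso(2) by (metis bij_betw_iff_bijections)
        then obtain q where q: "a = j # q" "q \<in> verts (ts ! j)"
          using tree_iso_preimage_branch[OF \<psi> i j] by blast
        then have "\<psi>j q = q'" using dj[of q] a(2) by simp
        then show "q' \<in> \<psi>j ` verts (ts ! j)" using q(2) by blast
      qed
    qed
  qed
  have "\<psi>j \<in> extensional (verts (ts ! j))" unfolding \<psi>j_def by simp
  then have "\<psi>j \<in> verts (ts ! j) \<rightarrow>\<^sub>E verts (us ! i)"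
    using bij_betw_apply[OF bij] by (simp add: PiE_iff)
  moreover have "vless a b \<longleftrightarrow> vless (\<psi>j a) (\<psi>j b)" if "a \<in> verts (ts ! j)" "b \<in> verts (ts ! j)" for a b
    using iso(3)[of "j # a" "j # b"] dj that j by simp
  ultimately show ?thesis unfolding \<psi>j_def[symmetric] tree_isos_def using bij by blast
qed

lemma tree_isos_Node_branches:
  assumes \<psi>: "\<psi> \<in> tree_isos (Node ts) (Node us)"
  obtains f where "bij_betw f {..<length ts} {..<length us}"
    "\<And>j. j < length ts \<Longrightarrow> tree_isos (ts ! j) (us ! f j) \<noteq> {}"
proof -
  note inj = inj_onD[OF bij_betw_imp_inj_on[OF tree_isosD(2)[OF \<psi>]]]
  define f where "f j = hd (\<psi> [j])" for j
  have child: "f j < length us \<and> \<psi> [j] = [f j]" if "j < length ts" for j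
    using tree_iso_child[OF \<psi> that] unfolding f_def by (metis list.sel(1))
  have "bij_betw f {..<length ts} {..<length us}"
  proof (rule bij_betw_imageI)
    show "inj_on f {..<length ts}"
    proof (rule inj_onI)
      fix j j' assume "j \<in> {..<length ts}" "j' \<in> {..<length ts}" "f j = f j'"
      then have "\<psi> [j] = \<psi> [j']" "[j] \<in> verts (Node ts)" "[j'] \<in> verts (Node ts)" using child by auto
      then show "j = j'" using inj by blast
    qed
    show "f ` {..<length ts} = {..<length us}"
    proof
      show "f ` {..<length ts} \<subseteq> {..<length us}" using child by auto
      show "{..<length us} \<subseteq> f ` {..<length ts}"
      proof
        fix i assume "i \<in> {..<length us}"
        then have "[i] \<in> verts (Node us)" by simp
        then obtain a where a: "a \<in> verts (Node ts)" "\<psi> a = [i]"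
          using tree_isosD(2)[OF \<psi>] by (metis bij_betw_iff_bijections)
        obtain j q where jq: "a = j # q" using a tree_iso_root[OF \<psi>] by (cases a) auto
        have j: "j < length ts" using a(1) jq by simp
        have "prefix (\<psi> [j]) [i]" using prefix_tree_iso[OF \<psi>, of "[j]" a] a jq j by simp
        then have "f j = i" using child[OF j] by simp
        then show "i \<in> f ` {..<length ts}" using j by blast
      qed
    qed
  qed
  moreover have "tree_isos (ts ! j) (us ! f j) \<noteq> {}" if "j < length ts" for j
    using tree_iso_branch[OF \<psi> that] child[OF that] by blast
  ultimately show thesis using that by blast
qed

lemma bij_betw_branchwise:
  assumes f: "bij_betw f {..<length ts} {..<length us}"
    and \<Psi>b: "\<And>j. j < length ts \<Longrightarrow> bij_betw (\<Psi> j) (verts (ts ! j)) (verts (us ! f j))"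
  shows "bij_betw (\<lambda>x. case x of [] \<Rightarrow> [] | j # q \<Rightarrow> f j # \<Psi> j q) (verts (Node ts)) (verts (Node us))"
    (is "bij_betw ?g _ _")
proof -
  let ?\<sigma> = "Node ts" and ?\<rho> = "Node us"
  have finj: "inj_on f {..<length ts}" and fim: "f ` {..<length ts} = {..<length us}"
    using f by (auto simp: bij_betw_def)
  have g_into: "?g x \<in> verts ?\<rho>" if "x \<in> verts ?\<sigma>" for x
  proof (cases x)
    case (Cons j q)
    then have "j < length ts" "q \<in> verts (ts ! j)" using that by simp_all
    then show ?thesis using Cons \<Psi>b fim by (auto simp: bij_betw_def)
  qed simp
  have g_inj: "inj_on ?g (verts ?\<sigma>)"
  proof (rule inj_onI)
    fix x y assume x: "x \<in> verts ?\<sigma>" and y: "y \<in> verts ?\<sigma>" and eq: "?g x = ?g y"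
    show "x = y"
    proof (cases x; cases y)
      fix j q j' q' assume c: "x = j # q" "y = j' # q'"
      have jq: "j < length ts" "q \<in> verts (ts ! j)" "j' < length ts" "q' \<in> verts (ts ! j')"
        using x y c by simp_all
      have "f j = f j'" "\<Psi> j q = \<Psi> j' q'" using eq c by simp_all
      then have "j = j'" using finj jq by (auto dest: inj_onD)
      then have "q = q'"
        using \<Psi>b[OF jq(1)] jq \<open>\<Psi> j q = \<Psi> j' q'\<close> by (auto simp: bij_betw_def dest: inj_onD)
      then show ?thesis using c \<open>j = j'\<close> by simp
    qed (use eq in auto)
  qed
  have g_surj: "verts ?\<rho> \<subseteq> ?g ` verts ?\<sigma>"
  proof
    fix w assume w: "w \<in> verts ?\<rho>"
    show "w \<in> ?g ` verts ?\<sigma>"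
    proof (cases w)
      case Nil
      then show ?thesis by (metis (no_types, lifting) Nil_in_verts image_eqI list.simps(4))
    next
      case (Cons i q')
      then have iq: "i < length us" "q' \<in> verts (us ! i)" using w by simp_all
      have "i \<in> f ` {..<length ts}" using fim iq(1) by simp
      then obtain j where j: "j < length ts" "f j = i" by blast
      then have "q' \<in> \<Psi> j ` verts (ts ! j)" using \<Psi>b[OF j(1)] iq by (auto simp: bij_betw_def)
      then obtain q where q: "q \<in> verts (ts ! j)" "\<Psi> j q = q'" by blast
      have "j # q \<in> verts ?\<sigma>" using j q by simp
      moreover have "?g (j # q) = w" using Cons j q by simp
      ultimately show ?thesis by blast
    qed
  qed
  show ?thesis using g_inj g_into g_surj by (auto simp: bij_betw_def)
qed

lemma tree_isos_Node_of_branches: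
  assumes f: "bij_betw f {..<length ts} {..<length us}"
    and \<Psi>: "\<And>j. j < length ts \<Longrightarrow> \<Psi> j \<in> tree_isos (ts ! j) (us ! f j)"
  shows "restrict (\<lambda>x. case x of [] \<Rightarrow> [] | j # q \<Rightarrow> f j # \<Psi> j q) (verts (Node ts))
    \<in> tree_isos (Node ts) (Node us)" (is "restrict ?g _ \<in> _")
proof -
  let ?\<sigma> = "Node ts" and ?\<rho> = "Node us"
  have finj: "inj_on f {..<length ts}" using f by (simp add: bij_betw_def)
  note \<Psi>v = tree_isosD(3)[OF \<Psi>]
  have bij: "bij_betw ?g (verts ?\<sigma>) (verts ?\<rho>)"
    using bij_betw_branchwise[OF f tree_isosD(2)[OF \<Psi>]] .
  have g_vless: "vless a b \<longleftrightarrow> vless (?g a) (?g b)" if a: "a \<in> verts ?\<sigma>" and b: "b \<in> verts ?\<sigma>" for a b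
  proof (cases a; cases b)
    fix j q j' q' assume c: "a = j # q" "b = j' # q'"
    have jq: "j < length ts" "q \<in> verts (ts ! j)" "j' < length ts" "q' \<in> verts (ts ! j')"
      using a b c by simp_all
    show ?thesis
    proof (cases "j = j'")
      case True
      then show ?thesis using c jq \<Psi>v[OF jq(1)] by simp
    next
      case False
      then have "f j \<noteq> f j'" using finj jq by (auto dest: inj_onD)
      then show ?thesis using c False by simp
    qed
  qed auto
  have "bij_betw (restrict ?g (verts ?\<sigma>)) (verts ?\<sigma>) (verts ?\<rho>)"
    using bij by (rule bij_betw_cong[THEN iffD1, rotated]) simp
  then show ?thesis unfolding tree_isos_def using bij_betw_apply[OF bij] g_vless by auto
qed

lemma mset_map_eq_if_bij:
  assumes f: "bij_betw f {..<length xs} {..<length ys}"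
    and g: "\<And>j. j < length xs \<Longrightarrow> g (xs ! j) = g (ys ! f j)"
  shows "mset (map g xs) = mset (map g ys)"
proof -
  have map_upt: "map g zs = map (\<lambda>i. g (zs ! i)) [0..<length zs]" for zs :: "'a list"
    by (rule nth_equalityI) auto
  have "mset (map g ys) = image_mset (\<lambda>i. g (ys ! i)) (mset_set {..<length ys})"
    by (simp add: map_upt[of ys] atLeast0LessThan)
  also have "mset_set {..<length ys} = image_mset f (mset_set {..<length xs})"
    using f image_mset_mset_set[of f "{..<length xs}"] by (simp add: bij_betw_def)
  also have "image_mset (\<lambda>i. g (ys ! i)) (image_mset f (mset_set {..<length xs})) =
      image_mset (\<lambda>j. g (xs ! j)) (mset_set {..<length xs})"
    by (simp add: image_mset.compositionality) (rule image_mset_cong, simp add: g)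
  also have "\<dots> = mset (map g xs)" by (simp add: map_upt[of xs] atLeast0LessThan)
  finally show ?thesis by simp
qed

lemma tree_isos_imp_pi_tree_eq: "\<psi> \<in> tree_isos \<sigma> \<rho> \<Longrightarrow> pi_tree \<sigma> = pi_tree \<rho>"
proof (induction \<sigma> arbitrary: \<rho> \<psi>)
  case (Node ts)
  obtain us where \<rho>: "\<rho> = Node us" by (cases \<rho>)
  obtain f where f: "bij_betw f {..<length ts} {..<length us}"
    "\<And>j. j < length ts \<Longrightarrow> tree_isos (ts ! j) (us ! f j) \<noteq> {}"
    using tree_isos_Node_branches Node.prems \<rho> by blast
  have "pi_tree (ts ! j) = pi_tree (us ! f j)" if "j < length ts" for j
    using Node.IH[OF nth_mem[OF that]] f(2)[OF that] by blast
  then have "mset (map pi_tree ts) = mset (map pi_tree us)" by (rule mset_map_eq_if_bij[OF f(1)])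
  then show ?case using \<rho> by simp
qed

lemma pi_tree_eq_imp_tree_isos: "pi_tree \<sigma> = pi_tree \<rho> \<Longrightarrow> tree_isos \<sigma> \<rho> \<noteq> {}"
proof (induction \<sigma> arbitrary: \<rho>)
  case (Node ts)
  obtain us where \<rho>: "\<rho> = Node us" by (cases \<rho>)
  have "mset (map pi_tree ts) = mset (map pi_tree us)" using Node.prems \<rho> by simp
  from permutation_Ex_bij[OF this] obtain f where
    f: "bij_betw f {..<length ts} {..<length us}"
      "\<forall>j<length ts. pi_tree (ts ! j) = pi_tree (us ! f j)"
    using bij_betw_apply by fastforce
  have "tree_isos (ts ! j) (us ! f j) \<noteq> {}" if "j < length ts" for j
    using Node.IH[OF nth_mem[OF that]] f(2) that by blast
  then have "\<forall>j\<in>{..<length ts}. \<exists>\<psi>. \<psi> \<in> tree_isos (ts ! j) (us ! f j)" by blast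
  then obtain \<Psi> where "\<forall>j\<in>{..<length ts}. \<Psi> j \<in> tree_isos (ts ! j) (us ! f j)"
    by (metis bchoice)
  then show ?case using tree_isos_Node_of_branches[OF f(1)] \<rho> by blast
qed

lemma card_tree_isos:
  "card (tree_isos \<sigma> \<rho>) = (if pi_tree \<sigma> = pi_tree \<rho> then sym_factor \<sigma> else 0)"
proof (cases "pi_tree \<sigma> = pi_tree \<rho>")
  case True
  then obtain \<psi> where "\<psi> \<in> tree_isos \<sigma> \<rho>" using pi_tree_eq_imp_tree_isos by blast
  then show ?thesis
    using True card_tree_isos_eq_automorphisms sym_factor_eq_card_tree_isos by simp
next
  case False
  then have "tree_isos \<sigma> \<rho> = {}" using tree_isos_imp_pi_tree_eq by blast
  then show ?thesis using False by simp
qed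

lemma sym_factor_pos: "sym_factor \<sigma> > 0"
proof -
  have "tree_isos \<sigma> \<sigma> \<noteq> {}" by (rule pi_tree_eq_imp_tree_isos) (rule refl)
  then show ?thesis using finite_tree_isos sym_factor_eq_card_tree_isos by (simp add: card_gt_0_iff)
qed

section \<open>Counting the maps in \<open>b\<^sup>~\<close>\<close>

lemma rel_image_tree_rel_pred_chain:
  assumes inj: "inj_on f (verts t)"
    and xz: "(x, z) \<in> rel_image f (tree_rel t)" and yz: "(y, z) \<in> rel_image f (tree_rel t)"
  shows "x = y \<or> (x, y) \<in> rel_image f (tree_rel t) \<or> (y, x) \<in> rel_image f (tree_rel t)"
proof -
  obtain a c where ac: "x = f a" "z = f c" "a \<in> verts t" "c \<in> verts t" "vless a c"
    using xz unfolding rel_image_tree_rel by blast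
  obtain b c' where bc: "y = f b" "z = f c'" "b \<in> verts t" "c' \<in> verts t" "vless b c'"
    using yz unfolding rel_image_tree_rel by blast
  have "c' = c" using inj_onD[OF inj, of c' c] ac bc by simp
  then have "prefix a c" "prefix b c" using ac(5) bc(5) by (simp_all add: vless_def)
  then have "prefix a b \<or> prefix b a" by (rule prefix_same_cases)
  then have "a = b \<or> vless a b \<or> vless b a" by (auto simp: vless_def)
  then show ?thesis
    using mem_rel_image_tree_rel[OF inj ac(3) bc(3)] mem_rel_image_tree_rel[OF inj bc(3) ac(3)] ac(1) bc(1)
    by blast
qed

lemma admissible_rel_image_tree_rel:
  assumes "inj_on f (verts \<sigma>)"
    and "tree_rel \<tau> \<subseteq> rel_image f (tree_rel \<sigma>)" "rel_image f (tree_rel \<sigma>) \<subseteq> lll_rel \<tau>"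
  shows "admissible \<tau> (rel_image f (tree_rel \<sigma>))"
  unfolding admissible_def
  using assms trans_rel_image_tree_rel rel_image_tree_rel_pred_chain by blast

definition btilde_maps :: "ptree \<Rightarrow> ptree \<Rightarrow> (vertex \<Rightarrow> vertex) set" where
  "btilde_maps \<sigma> \<tau> = {\<phi> \<in> verts \<sigma> \<rightarrow>\<^sub>E verts \<tau>. bij_betw \<phi> (verts \<sigma>) (verts \<tau>) \<and>
       (\<forall>v\<in>verts \<sigma>. \<forall>w\<in>verts \<sigma>. vless v w \<longrightarrow> llless \<tau> (\<phi> v) (\<phi> w)) \<and>
       (\<forall>x\<in>verts \<tau>. \<forall>y\<in>verts \<tau>. vless x y \<longrightarrow>
           vless (inv_into (verts \<sigma>) \<phi> x) (inv_into (verts \<sigma>) \<phi> y))}"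

lemma rel_image_subset_lll_rel_iff:
  assumes "\<And>v. v \<in> verts \<sigma> \<Longrightarrow> \<phi> v \<in> verts \<tau>"
  shows "rel_image \<phi> (tree_rel \<sigma>) \<subseteq> lll_rel \<tau> \<longleftrightarrow>
    (\<forall>v\<in>verts \<sigma>. \<forall>w\<in>verts \<sigma>. vless v w \<longrightarrow> llless \<tau> (\<phi> v) (\<phi> w))"
proof
  assume "rel_image \<phi> (tree_rel \<sigma>) \<subseteq> lll_rel \<tau>"
  then show "\<forall>v\<in>verts \<sigma>. \<forall>w\<in>verts \<sigma>. vless v w \<longrightarrow> llless \<tau> (\<phi> v) (\<phi> w)"
    unfolding rel_image_tree_rel lll_rel_def by blast
next
  assume mono: "\<forall>v\<in>verts \<sigma>. \<forall>w\<in>verts \<sigma>. vless v w \<longrightarrow> llless \<tau> (\<phi> v) (\<phi> w)"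
  show "rel_image \<phi> (tree_rel \<sigma>) \<subseteq> lll_rel \<tau>"
  proof
    fix z assume "z \<in> rel_image \<phi> (tree_rel \<sigma>)"
    then obtain a b where "z = (\<phi> a, \<phi> b)" "a \<in> verts \<sigma>" "b \<in> verts \<sigma>" "vless a b"
      unfolding rel_image_tree_rel by blast
    then show "z \<in> lll_rel \<tau>" using mono assms by (simp add: lll_rel_def)
  qed
qed

lemma tree_rel_subset_rel_image_iff:
  assumes bij: "bij_betw \<phi> (verts \<sigma>) (verts \<tau>)"
  shows "tree_rel \<tau> \<subseteq> rel_image \<phi> (tree_rel \<sigma>) \<longleftrightarrow>
    (\<forall>x\<in>verts \<tau>. \<forall>y\<in>verts \<tau>. vless x y \<longrightarrow>
       vless (inv_into (verts \<sigma>) \<phi> x) (inv_into (verts \<sigma>) \<phi> y))"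
proof
  assume sub: "tree_rel \<tau> \<subseteq> rel_image \<phi> (tree_rel \<sigma>)"
  show "\<forall>x\<in>verts \<tau>. \<forall>y\<in>verts \<tau>. vless x y \<longrightarrow>
      vless (inv_into (verts \<sigma>) \<phi> x) (inv_into (verts \<sigma>) \<phi> y)"
  proof (intro ballI impI)
    fix x y assume "x \<in> verts \<tau>" "y \<in> verts \<tau>" "vless x y"
    then have "(x, y) \<in> rel_image \<phi> (tree_rel \<sigma>)" using sub by (auto simp: tree_rel_def)
    then obtain a b where "x = \<phi> a" "y = \<phi> b" "a \<in> verts \<sigma>" "b \<in> verts \<sigma>" "vless a b"
      unfolding rel_image_tree_rel by blast
    then show "vless (inv_into (verts \<sigma>) \<phi> x) (inv_into (verts \<sigma>) \<phi> y)"
      using bij_betw_imp_inj_on[OF bij] by (simp add: inv_into_f_f)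
  qed
next
  assume mono: "\<forall>x\<in>verts \<tau>. \<forall>y\<in>verts \<tau>. vless x y \<longrightarrow>
      vless (inv_into (verts \<sigma>) \<phi> x) (inv_into (verts \<sigma>) \<phi> y)"
  have inv: "inv_into (verts \<sigma>) \<phi> x \<in> verts \<sigma>" "\<phi> (inv_into (verts \<sigma>) \<phi> x) = x" if "x \<in> verts \<tau>" for x
    using bij that by (auto simp: bij_betw_def inv_into_into f_inv_into_f)
  show "tree_rel \<tau> \<subseteq> rel_image \<phi> (tree_rel \<sigma>)"
  proof
    fix z assume "z \<in> tree_rel \<tau>"
    then obtain x y where z: "z = (x, y)" "x \<in> verts \<tau>" "y \<in> verts \<tau>" "vless x y"
      by (auto simp: tree_rel_def)
    let ?a = "inv_into (verts \<sigma>) \<phi> x" and ?b = "inv_into (verts \<sigma>) \<phi> y"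
    have "(\<phi> ?a, \<phi> ?b) \<in> rel_image \<phi> (tree_rel \<sigma>)"
      using mono z inv(1) unfolding rel_image_tree_rel by blast
    then show "z \<in> rel_image \<phi> (tree_rel \<sigma>)" using inv(2) z by simp
  qed
qed

lemma mem_btilde_maps_iff:
  "\<phi> \<in> btilde_maps \<sigma> \<tau> \<longleftrightarrow> \<phi> \<in> extensional (verts \<sigma>) \<and> bij_betw \<phi> (verts \<sigma>) (verts \<tau>) \<and>
     tree_rel \<tau> \<subseteq> rel_image \<phi> (tree_rel \<sigma>) \<and> rel_image \<phi> (tree_rel \<sigma>) \<subseteq> lll_rel \<tau>"
proof (cases "bij_betw \<phi> (verts \<sigma>) (verts \<tau>)")
  case True
  have "\<phi> \<in> verts \<sigma> \<rightarrow>\<^sub>E verts \<tau> \<longleftrightarrow> \<phi> \<in> extensional (verts \<sigma>)"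
    using bij_betw_apply[OF True] by (auto simp: PiE_iff)
  moreover have "rel_image \<phi> (tree_rel \<sigma>) \<subseteq> lll_rel \<tau> \<longleftrightarrow>
      (\<forall>v\<in>verts \<sigma>. \<forall>w\<in>verts \<sigma>. vless v w \<longrightarrow> llless \<tau> (\<phi> v) (\<phi> w))"
    by (rule rel_image_subset_lll_rel_iff) (rule bij_betw_apply[OF True])
  ultimately show ?thesis
    unfolding btilde_maps_def mem_Collect_eq tree_rel_subset_rel_image_iff[OF True]
    using True by blast
qed (simp add: btilde_maps_def)

definition entry_maps :: "ptree \<Rightarrow> entry \<Rightarrow> (vertex \<Rightarrow> vertex) set" where
  "entry_maps \<sigma> e = (\<lambda>\<psi>. restrict (emap e \<circ> \<psi>) (verts \<sigma>)) ` tree_isos \<sigma> (etree e)"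

lemma rel_image_restrict_comp:
  "rel_image (restrict (g \<circ> f) (verts t)) (tree_rel t) = rel_image g (rel_image f (tree_rel t))"
  unfolding rel_image_def image_image by (intro image_cong refl) (auto simp: tree_rel_def)

lemma rel_image_tree_iso:
  assumes \<psi>: "\<psi> \<in> tree_isos \<sigma> \<rho>"
  shows "rel_image \<psi> (tree_rel \<sigma>) = tree_rel \<rho>"
proof
  note iso = tree_isosD[OF \<psi>]
  show "rel_image \<psi> (tree_rel \<sigma>) \<subseteq> tree_rel \<rho>"
  proof
    fix z assume "z \<in> rel_image \<psi> (tree_rel \<sigma>)"
    then obtain a b where ab: "z = (\<psi> a, \<psi> b)" "a \<in> verts \<sigma>" "b \<in> verts \<sigma>" "vless a b"
      unfolding rel_image_tree_rel by blast
    then show "z \<in> tree_rel \<rho>"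
      using iso(3)[OF ab(2,3)] bij_betw_apply[OF iso(2)] by (simp add: tree_rel_def)
  qed
  show "tree_rel \<rho> \<subseteq> rel_image \<psi> (tree_rel \<sigma>)"
  proof
    fix z assume "z \<in> tree_rel \<rho>"
    then obtain a b where ab: "z = (a, b)" "a \<in> verts \<rho>" "b \<in> verts \<rho>" "vless a b"
      by (auto simp: tree_rel_def)
    have "a \<in> \<psi> ` verts \<sigma>" "b \<in> \<psi> ` verts \<sigma>" using ab(2,3) iso(2) by (simp_all add: bij_betw_def)
    then obtain a' b' where a'b': "a' \<in> verts \<sigma>" "\<psi> a' = a" "b' \<in> verts \<sigma>" "\<psi> b' = b"
      by blast
    then have "vless a' b'" using iso(3)[OF a'b'(1,3)] ab(4) by simp
    then show "z \<in> rel_image \<psi> (tree_rel \<sigma>)"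
      using ab(1) a'b' unfolding rel_image_tree_rel by blast
  qed
qed

lemma rel_image_entry_map:
  assumes "erel e = rel_image (emap e) (tree_rel (etree e))" and "\<psi> \<in> tree_isos \<sigma> (etree e)"
  shows "rel_image (restrict (emap e \<circ> \<psi>) (verts \<sigma>)) (tree_rel \<sigma>) = erel e"
  unfolding assms(1) rel_image_restrict_comp rel_image_tree_iso[OF assms(2)] ..

lemma entry_maps_subset_btilde_maps:
  assumes "e \<in> entries \<tau>" shows "entry_maps \<sigma> e \<subseteq> btilde_maps \<sigma> \<tau>"
proof
  fix \<phi> assume "\<phi> \<in> entry_maps \<sigma> e"
  then obtain \<psi> where \<psi>: "\<psi> \<in> tree_isos \<sigma> (etree e)" and \<phi>: "\<phi> = restrict (emap e \<circ> \<psi>) (verts \<sigma>)"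
    unfolding entry_maps_def by blast
  have valid: "valid_entry \<tau> e" using valid_entry_entries assms by blast
  then have tb: "bij_betw (emap e) (verts (etree e)) (verts \<tau>)"
    and R: "erel e = rel_image (emap e) (tree_rel (etree e))"
    and sub: "tree_rel \<tau> \<subseteq> erel e" and sup: "erel e \<subseteq> lll_rel \<tau>"
    unfolding valid_entry_def by blast+
  have "bij_betw \<phi> (verts \<sigma>) (verts \<tau>)"
    unfolding \<phi> using bij_betw_trans[OF tree_isosD(2)[OF \<psi>] tb]
    by (rule bij_betw_cong[THEN iffD1, rotated]) simp
  moreover have "rel_image \<phi> (tree_rel \<sigma>) = erel e" unfolding \<phi> using rel_image_entry_map[OF R \<psi>] .
  moreover have "\<phi> \<in> extensional (verts \<sigma>)" unfolding \<phi> by simp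
  ultimately show "\<phi> \<in> btilde_maps \<sigma> \<tau>" unfolding mem_btilde_maps_iff using sub sup by simp
qed

lemma btilde_maps_subset_entry_maps: "btilde_maps \<sigma> \<tau> \<subseteq> (\<Union>e\<in>entries \<tau>. entry_maps \<sigma> e)"
proof
  fix \<phi> assume "\<phi> \<in> btilde_maps \<sigma> \<tau>"
  then have ext: "\<phi> \<in> extensional (verts \<sigma>)" and b: "bij_betw \<phi> (verts \<sigma>) (verts \<tau>)"
    and sub: "tree_rel \<tau> \<subseteq> rel_image \<phi> (tree_rel \<sigma>)" and sup: "rel_image \<phi> (tree_rel \<sigma>) \<subseteq> lll_rel \<tau>"
    unfolding mem_btilde_maps_iff by blast+
  have inj: "inj_on \<phi> (verts \<sigma>)" and im: "\<phi> ` verts \<sigma> = verts \<tau>" using b by (auto simp: bij_betw_def)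
  obtain e where e: "e \<in> entries \<tau>" "erel e = rel_image \<phi> (tree_rel \<sigma>)"
    using admissible_imp_entry admissible_rel_image_tree_rel[OF inj sub sup] by blast
  have tb: "bij_betw (emap e) (verts (etree e)) (verts \<tau>)"
    and R: "erel e = rel_image (emap e) (tree_rel (etree e))"
    using valid_entry_entries[OF e(1)] by (auto simp: valid_entry_def)
  have tinj: "inj_on (emap e) (verts (etree e))" using tb by (auto simp: bij_betw_def)
  define \<psi> where "\<psi> = restrict (inv_into (verts (etree e)) (emap e) \<circ> \<phi>) (verts \<sigma>)"
  have \<psi>b: "bij_betw \<psi> (verts \<sigma>) (verts (etree e))"
    unfolding \<psi>_def using bij_betw_trans[OF b bij_betw_inv_into[OF tb]]
    by (rule bij_betw_cong[THEN iffD1, rotated]) simp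
  have \<psi>in: "\<psi> a \<in> verts (etree e)" if "a \<in> verts \<sigma>" for a using bij_betw_apply[OF \<psi>b that] .
  have emap_\<psi>: "emap e (\<psi> a) = \<phi> a" if "a \<in> verts \<sigma>" for a
  proof -
    have "\<phi> a \<in> emap e ` verts (etree e)" using that im tb by (auto simp: bij_betw_def)
    then show ?thesis unfolding \<psi>_def using that by (simp add: f_inv_into_f)
  qed
  have "\<psi> \<in> tree_isos \<sigma> (etree e)"
    unfolding tree_isos_def
  proof (intro CollectI conjI ballI \<psi>b)
    show "\<psi> \<in> verts \<sigma> \<rightarrow>\<^sub>E verts (etree e)" using \<psi>in unfolding \<psi>_def by auto
    fix a b assume ab: "a \<in> verts \<sigma>" "b \<in> verts \<sigma>"
    have "vless a b \<longleftrightarrow> (\<phi> a, \<phi> b) \<in> rel_image \<phi> (tree_rel \<sigma>)"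
      using mem_rel_image_tree_rel[OF inj ab] by simp
    also have "\<dots> \<longleftrightarrow> (emap e (\<psi> a), emap e (\<psi> b)) \<in> rel_image (emap e) (tree_rel (etree e))"
      using e R emap_\<psi> ab by simp
    also have "\<dots> \<longleftrightarrow> vless (\<psi> a) (\<psi> b)" using mem_rel_image_tree_rel[OF tinj \<psi>in \<psi>in] ab by simp
    finally show "vless a b \<longleftrightarrow> vless (\<psi> a) (\<psi> b)" .
  qed
  moreover have "\<phi> = restrict (emap e \<circ> \<psi>) (verts \<sigma>)"
    using emap_\<psi> ext by (auto simp: extensional_def)
  ultimately show "\<phi> \<in> (\<Union>e\<in>entries \<tau>. entry_maps \<sigma> e)"
    using e(1) unfolding entry_maps_def by blast
qed

lemma disjoint_entry_maps:
  assumes "e \<in> entries \<tau>" "e' \<in> entries \<tau>" "e \<noteq> e'"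
  shows "entry_maps \<sigma> e \<inter> entry_maps \<sigma> e' = {}"
proof (rule ccontr)
  assume "entry_maps \<sigma> e \<inter> entry_maps \<sigma> e' \<noteq> {}"
  then obtain \<psi> \<psi>' where \<psi>: "\<psi> \<in> tree_isos \<sigma> (etree e)" "\<psi>' \<in> tree_isos \<sigma> (etree e')"
    and eq: "restrict (emap e \<circ> \<psi>) (verts \<sigma>) = restrict (emap e' \<circ> \<psi>') (verts \<sigma>)"
    unfolding entry_maps_def by blast
  have "erel e = rel_image (emap e) (tree_rel (etree e))"
    "erel e' = rel_image (emap e') (tree_rel (etree e'))"
    using valid_entry_entries assms(1,2) by (simp_all add: valid_entry_def)
  then have "erel e = erel e'" using rel_image_entry_map \<psi> eq by metis
  then show False using inj_onD[OF inj_on_erel_entries] assms by blast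
qed

lemma card_entry_maps:
  assumes "e \<in> entries \<tau>"
  shows "card (entry_maps \<sigma> e) = (if pi_tree \<sigma> = pi_tree (etree e) then sym_factor \<sigma> else 0)"
proof -
  have tinj: "inj_on (emap e) (verts (etree e))"
    using valid_entry_entries[OF assms] by (auto simp: valid_entry_def bij_betw_def)
  have "inj_on (\<lambda>\<psi>. restrict (emap e \<circ> \<psi>) (verts \<sigma>)) (tree_isos \<sigma> (etree e))"
  proof (rule inj_onI)
    fix \<psi> \<psi>' assume \<psi>: "\<psi> \<in> tree_isos \<sigma> (etree e)" "\<psi>' \<in> tree_isos \<sigma> (etree e)"
      and eq: "restrict (emap e \<circ> \<psi>) (verts \<sigma>) = restrict (emap e \<circ> \<psi>') (verts \<sigma>)"
    have "\<psi> x = \<psi>' x" if "x \<in> verts \<sigma>" for x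
    proof -
      have "emap e (\<psi> x) = emap e (\<psi>' x)" using fun_cong[OF eq, of x] that by simp
      then show ?thesis
        using tinj bij_betw_apply[OF tree_isosD(2)[OF \<psi>(1)] that]
          bij_betw_apply[OF tree_isosD(2)[OF \<psi>(2)] that] by (auto dest: inj_onD)
    qed
    then show "\<psi> = \<psi>'" by (intro extensionalityI[OF tree_isosD(1)[OF \<psi>(1)] tree_isosD(1)[OF \<psi>(2)]])
  qed
  then have "card (entry_maps \<sigma> e) = card (tree_isos \<sigma> (etree e))"
    unfolding entry_maps_def by (rule card_image)
  then show ?thesis by (simp add: card_tree_isos)
qed

lemma b_tilde_eq: "b_tilde \<sigma> \<tau> = sym_factor \<sigma> * card {e \<in> entries \<tau>. pi_tree (etree e) = pi_tree \<sigma>}"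
proof -
  have "btilde_maps \<sigma> \<tau> = (\<Union>e\<in>entries \<tau>. entry_maps \<sigma> e)"
    using btilde_maps_subset_entry_maps entry_maps_subset_btilde_maps by blast
  then have "b_tilde \<sigma> \<tau> = card (\<Union>e\<in>entries \<tau>. entry_maps \<sigma> e)"
    unfolding b_tilde_def btilde_maps_def by simp
  also have "\<dots> = (\<Sum>e\<in>entries \<tau>. card (entry_maps \<sigma> e))"
    using finite_entries disjoint_entry_maps
    by (intro card_UN_disjoint) (auto simp: entry_maps_def finite_tree_isos)
  also have "\<dots> = (\<Sum>e\<in>entries \<tau>. if pi_tree (etree e) = pi_tree \<sigma> then sym_factor \<sigma> else 0)"
    by (rule sum.cong) (auto simp: card_entry_maps)
  also have "\<dots> = card {e \<in> entries \<tau>. pi_tree (etree e) = pi_tree \<sigma>} * sym_factor \<sigma>"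
    using finite_entries[of \<tau>] by (simp add: sum.If_cases Int_def)
  finally show ?thesis by (simp add: ac_simps)
qed

theorem theorem2p4:
  fixes \<tau> \<sigma> :: ptree and s :: rtree
  assumes "pi_tree \<sigma> = s"
  shows "Poly_Mapping.lookup (Psibar (frag_of \<tau>)) s \<ge> 0 \<and>
         (of_int :: int \<Rightarrow> rat) (Poly_Mapping.lookup (Psibar (frag_of \<tau>)) s)
           = (of_nat :: nat \<Rightarrow> rat) (b_tilde \<sigma> \<tau>) / (of_nat :: nat \<Rightarrow> rat) (sym_factor \<sigma>)"
proof -
  define c where "c = card {e \<in> entries \<tau>. pi_tree (etree e) = s}"
  have "Poly_Mapping.lookup (Psibar (frag_of \<tau>)) s = int c"
    unfolding c_def by (rule lookup_Psibar_frag_of)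
  moreover have "b_tilde \<sigma> \<tau> = sym_factor \<sigma> * c" unfolding c_def b_tilde_eq assms ..
  moreover have "sym_factor \<sigma> > 0" by (rule sym_factor_pos)
  ultimately show ?thesis by simp
qed

end
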